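(* Let $k\ge1$. Assume that $R_0,\dots,R_k$ (from BCG) have full column rank, that $\mu$ is not an eigenvalue of $T_1,\dots,T_k$, and that $\Delta^{(\mu)}_1,\dots,\Delta^{(\mu)}_{k+1}$ are nonsingular. Define $\Upsilon^{(\mu)}_j=\Phi_j^{-1}(\Delta^{(\mu)}_{j+1})^{-1}\Phi_j$ and $\Theta^{(\mu)}_j=(R_j^TR_j)\Upsilon^{(\mu)}_j$ for $j=0,\dots,k$. Then $\Upsilon^{(\mu)}_0=\mu^{-1}I_m$ and $$\Upsilon^{(\mu)}_k=\big[\mu(\Upsilon^{(\mu)}_{k-1}-\Upsilon_{k-1})+\Xi_k\big]^{-1}(\Upsilon^{(\mu)}_{k-1}-\Upsilon_{k-1}) =\big[\mu(\Theta^{(\mu)}_{k-1}-\Theta_{k-1})+R_k^TR_k\big]^{-1}(\Theta^{(\mu)}_{k-1}-\Theta_{k-1}),$$ where all displayed inverses exist.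
   Context: Let $A\in\mathbb{R}^{n\times n}$ be symmetric positive definite, let $B,X_0\in\mathbb{R}^{n\times m}$, and let $X=A^{-1}B$. The block conjugate gradient (BCG) algorithm sets $R_0=B-AX_0$, $P_0=R_0$, and for $k=1,2,\dots$: $\Upsilon_{k-1}=(P_{k-1}^TAP_{k-1})^{-1}(R_{k-1}^TR_{k-1})$, $X_k=X_{k-1}+P_{k-1}\Upsilon_{k-1}$, $R_k=R_{k-1}-AP_{k-1}\Upsilon_{k-1}$, $\Xi_k=(R_{k-1}^TR_{k-1})^{-1}(R_k^TR_k)$, $P_k=R_k+P_{k-1}\Xi_k$. Define $\mathfrak{E}_k=(X-X_k)^TA(X-X_k)$ and $\Theta_k=(R_k^TR_k)\Upsilon_k$. The block Lanczos algorithm below is started from the same $R_0=B-AX_0$. Let $A\in\mathbb{R}^{n\times n}$ be symmetric positive definite and $R_0\in\mathbb{R}^{n\times m}$ of full column rank. The block Lanczos algorithm started from $R_0$ is: $V_0=0$; $V_1\Gamma_0=R_0$ is a QR factorization ($V_1\in\mathbb{R}^{n\times m}$ with orthonormal columns, $\Gamma_0\in\mathbb{R}^{m\times m}$ upper triangular); for $k=1,2,\dots$: $W=AV_k-V_{k-1}\Gamma_{k-1}^T$, $\Omega_k=V_k^TW$, and $V_{k+1}\Gamma_k=W-V_k\Omega_k$ is a QR factorization. It is assumed that for all indices considered the block Krylov subspace $\mathrm{colspan}\{R_0,AR_0,\dots,A^{j-1}R_0\}$ has dimension $jm$, so that every $\Gamma_j$ is nonsingular and $V_i^TV_j=\delta_{ij}I_m$.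 Put $\mathcal V_k=(V_1,\dots,V_k)\in\mathbb{R}^{n\times km}$ and let $T_k\in\mathbb{R}^{km\times km}$ be the symmetric block tridiagonal matrix with diagonal blocks $\Omega_1,\dots,\Omega_k$, subdiagonal blocks $\Gamma_1,\dots,\Gamma_{k-1}$ and superdiagonal blocks $\Gamma_1^T,\dots,\Gamma_{k-1}^T$; one has $A\mathcal V_k=\mathcal V_kT_k+V_{k+1}\Gamma_kE_k^T$ and $T_k=\mathcal V_k^TA\mathcal V_k$ is symmetric positive definite. Define $\Delta_1=\Omega_1$, $\Delta_j=\Omega_j-\Gamma_{j-1}\Delta_{j-1}^{-1}\Gamma_{j-1}^T$ ($j\ge2$) (the diagonal blocks of the block $LDL^T$-type factorization of $T_k$; they are symmetric positive definite), $\Pi_j=\Gamma_j\Delta_j^{-1}$, $\Phi_0=\Gamma_0$ and $\Phi_j=\Pi_j\Phi_{j-1}$. Let $E_j=e_j\otimes I_m\in\mathbb{R}^{km\times m}$; for $M\in\mathbb{R}^{km\times km}$, $[M]_{i,j}$ denotes its $(i,j)$ block of size $m\times m$, and for $Y\in\mathbb{R}^{km\times m}$, $[Y]_j$ denotes its $j$th $m\times m$ block. Shifted quantities: for $\mu\in\mathbb{R}$ let $\overline\Delta^{(\mu)}_1=\Omega_1-\mu I_m$ and $\overline\Delta^{(\mu)}_{j+1}=\Omega_{j+1}-\mu I_m-\Gamma_j(\overline\Delta^{(\mu)}_j)^{-1}\Gamma_j^T$ (the diagonal blocks of the analogous factorization of $T_k-\mu I$). For $k\ge1$ let $\Omega^{(\mu)}_{k+1}=\mu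 I_m+\Gamma_k[(T_k-\mu I)^{-1}]_{k,k}\Gamma_k^T$ and let $T^{(\mu)}_{k+1}$ be $T_{k+1}$ with its last diagonal block $\Omega_{k+1}$ replaced by $\Omega^{(\mu)}_{k+1}$. Put $\Delta^{(\mu)}_1=\mu I_m$ and, for $k\ge1$, $\Delta^{(\mu)}_{k+1}=\Omega^{(\mu)}_{k+1}-\Gamma_k\Delta_k^{-1}\Gamma_k^T$ (the last diagonal block of the factorization of $T^{(\mu)}_{k+1}$). *)

theory Defs
  imports "Jordan_Normal_Form.Char_Poly"
begin

definition minv :: "real mat \<Rightarrow> real mat" where
  "minv M = (SOME N. N \<in> carrier_mat (dim_row M) (dim_row M) \<and> inverts_mat M N \<and> inverts_mat N M)"

definition sym_pos_def :: "nat \<Rightarrow> real mat \<Rightarrow> bool" where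
  "sym_pos_def n A \<longleftrightarrow> A \<in> carrier_mat n n \<and> A\<^sup>T = A \<and>
     (\<forall>v \<in> carrier_vec n. v \<noteq> 0\<^sub>v n \<longrightarrow> v \<bullet> (A *\<^sub>v v) > 0)"

definition full_col_rank :: "real mat \<Rightarrow> bool" where
  "full_col_rank M \<longleftrightarrow> (\<forall>v \<in> carrier_vec (dim_col M). M *\<^sub>v v = 0\<^sub>v (dim_row M) \<longrightarrow> v = 0\<^sub>v (dim_col M))"

definition krylov_mat :: "real mat \<Rightarrow> real mat \<Rightarrow> nat \<Rightarrow> real mat" where
  "krylov_mat A R0 j = mat (dim_row R0) (j * dim_col R0)
     (\<lambda>(i, c). ((A ^\<^sub>m (c div dim_col R0)) * R0) $$ (i, c mod dim_col R0))"

fun bcg :: "real mat \<Rightarrow> real mat \<Rightarrow> real mat \<Rightarrow> nat \<Rightarrow> real mat \<times> real mat \<times> real mat" where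
  "bcg A B X0 0 = (X0, B - A * X0, B - A * X0)"
| "bcg A B X0 (Suc k) =
     (let (X, R, P) = bcg A B X0 k;
          Ups = minv (P\<^sup>T * A * P) * (R\<^sup>T * R);
          X' = X + P * Ups;
          R' = R - A * P * Ups;
          Xi = minv (R\<^sup>T * R) * (R'\<^sup>T * R');
          P' = R' + P * Xi
      in (X', R', P'))"

definition bcg_X :: "real mat \<Rightarrow> real mat \<Rightarrow> real mat \<Rightarrow> nat \<Rightarrow> real mat" where
  "bcg_X A B X0 k = fst (bcg A B X0 k)"
definition bcg_R :: "real mat \<Rightarrow> real mat \<Rightarrow> real mat \<Rightarrow> nat \<Rightarrow> real mat" where
  "bcg_R A B X0 k = fst (snd (bcg A B X0 k))"
definition bcg_P :: "real mat \<Rightarrow> real mat \<Rightarrow> real mat \<Rightarrow> nat \<Rightarrow> real mat" where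
  "bcg_P A B X0 k = snd (snd (bcg A B X0 k))"

definition bcg_Ups :: "real mat \<Rightarrow> real mat \<Rightarrow> real mat \<Rightarrow> nat \<Rightarrow> real mat" where
  "bcg_Ups A B X0 j = minv ((bcg_P A B X0 j)\<^sup>T * A * bcg_P A B X0 j)
                      * ((bcg_R A B X0 j)\<^sup>T * bcg_R A B X0 j)"

definition bcg_Xi :: "real mat \<Rightarrow> real mat \<Rightarrow> real mat \<Rightarrow> nat \<Rightarrow> real mat" where
  "bcg_Xi A B X0 k = minv ((bcg_R A B X0 (k - 1))\<^sup>T * bcg_R A B X0 (k - 1))
                      * ((bcg_R A B X0 k)\<^sup>T * bcg_R A B X0 k)"

definition bcg_Theta :: "real mat \<Rightarrow> real mat \<Rightarrow> real mat \<Rightarrow> nat \<Rightarrow> real mat" where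
  "bcg_Theta A B X0 j = ((bcg_R A B X0 j)\<^sup>T * bcg_R A B X0 j) * bcg_Ups A B X0 j"

(* V, Gam, Om : nat => real mat are the Lanczos blocks V_j, Gamma_j, Omega_j (1-based as in the paper,
   Gamma_0 from the initial QR factorization, V_0 = 0). *)
definition is_block_lanczos ::
  "nat \<Rightarrow> nat \<Rightarrow> real mat \<Rightarrow> real mat \<Rightarrow> (nat \<Rightarrow> real mat) \<Rightarrow> (nat \<Rightarrow> real mat) \<Rightarrow> (nat \<Rightarrow> real mat) \<Rightarrow> nat \<Rightarrow> bool"
  where
  "is_block_lanczos n m A R0 V Gam Om K \<longleftrightarrow>
     V 0 = 0\<^sub>m n m \<and>
     V 1 \<in> carrier_mat n m \<and> Gam 0 \<in> carrier_mat m m \<and> upper_triangular (Gam 0) \<and>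
     (V 1)\<^sup>T * V 1 = 1\<^sub>m m \<and> V 1 * Gam 0 = R0 \<and>
     (\<forall>j. 1 \<le> j \<and> j \<le> K \<longrightarrow>
        (let W = A * V j - V (j - 1) * (Gam (j - 1))\<^sup>T in
           Om j = (V j)\<^sup>T * W \<and>
           V (j + 1) \<in> carrier_mat n m \<and> Gam j \<in> carrier_mat m m \<and> upper_triangular (Gam j) \<and>
           (V (j + 1))\<^sup>T * V (j + 1) = 1\<^sub>m m \<and>
           V (j + 1) * Gam j = W - V j * Om j))"

definition T_mat :: "nat \<Rightarrow> (nat \<Rightarrow> real mat) \<Rightarrow> (nat \<Rightarrow> real mat) \<Rightarrow> nat \<Rightarrow> real mat" where
  "T_mat m Gam Om k = mat (k * m) (k * m) (\<lambda>(i, j).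
     let bi = i div m; bj = j div m; a = i mod m; b = j mod m in
     if bi = bj then Om (bi + 1) $$ (a, b)
     else if bi = bj + 1 then Gam (bj + 1) $$ (a, b)
     else if bj = bi + 1 then (Gam (bi + 1))\<^sup>T $$ (a, b)
     else 0)"

(* (i,j) block (1-based) of size m x m of a matrix *)
definition blk :: "nat \<Rightarrow> real mat \<Rightarrow> nat \<Rightarrow> nat \<Rightarrow> real mat" where
  "blk m M i j = mat m m (\<lambda>(a, b). M $$ ((i - 1) * m + a, (j - 1) * m + b))"

fun Delta :: "(nat \<Rightarrow> real mat) \<Rightarrow> (nat \<Rightarrow> real mat) \<Rightarrow> nat \<Rightarrow> real mat" where
  "Delta Gam Om 0 = Om 0"  (* unused *)
| "Delta Gam Om (Suc 0) = Om 1"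
| "Delta Gam Om (Suc (Suc j)) =
     Om (j + 2) - Gam (j + 1) * minv (Delta Gam Om (j + 1)) * (Gam (j + 1))\<^sup>T"

definition Pi_blk :: "(nat \<Rightarrow> real mat) \<Rightarrow> (nat \<Rightarrow> real mat) \<Rightarrow> nat \<Rightarrow> real mat" where
  "Pi_blk Gam Om j = Gam j * minv (Delta Gam Om j)"

fun Phi :: "(nat \<Rightarrow> real mat) \<Rightarrow> (nat \<Rightarrow> real mat) \<Rightarrow> nat \<Rightarrow> real mat" where
  "Phi Gam Om 0 = Gam 0"
| "Phi Gam Om (Suc j) = Pi_blk Gam Om (Suc j) * Phi Gam Om j"

definition Om_mu :: "nat \<Rightarrow> (nat \<Rightarrow> real mat) \<Rightarrow> (nat \<Rightarrow> real mat) \<Rightarrow> real \<Rightarrow> nat \<Rightarrow> real mat" where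
  "Om_mu m Gam Om \<mu> k = \<mu> \<cdot>\<^sub>m 1\<^sub>m m
     + Gam k * blk m (minv (T_mat m Gam Om k - \<mu> \<cdot>\<^sub>m 1\<^sub>m (k * m))) k k * (Gam k)\<^sup>T"

definition Delta_mu :: "nat \<Rightarrow> (nat \<Rightarrow> real mat) \<Rightarrow> (nat \<Rightarrow> real mat) \<Rightarrow> real \<Rightarrow> nat \<Rightarrow> real mat" where
  "Delta_mu m Gam Om \<mu> j =
     (if j \<le> 1 then \<mu> \<cdot>\<^sub>m 1\<^sub>m m
      else Om_mu m Gam Om \<mu> (j - 1) - Gam (j - 1) * minv (Delta Gam Om (j - 1)) * (Gam (j - 1))\<^sup>T)"

definition Ups_mu :: "nat \<Rightarrow> (nat \<Rightarrow> real mat) \<Rightarrow> (nat \<Rightarrow> real mat) \<Rightarrow> real \<Rightarrow> nat \<Rightarrow> real mat" where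
  "Ups_mu m Gam Om \<mu> j = minv (Phi Gam Om j) * minv (Delta_mu m Gam Om \<mu> (j + 1)) * Phi Gam Om j"

end

theory Submission
  imports Defs
begin

(*
  Write Z_1, ..., Z_k for the block columns of V_k L^-T, where T_k = L D L^T is the
  block factorization with D = diag(Delta_1, ..., Delta_k). Induction over the BCG steps shows
  R_j = (-1)^j V_(j+1) Phi_j and P_j = (-1)^j Z_(j+1) Phi_j, and with Z_p^T A Z_p = Delta_p this gives
  R_j^T R_j = Phi_j^T Phi_j, Xi_k = (Phi_(k-1)^T Phi_(k-1))^-1 Phi_k^T Phi_k and
  Upsilon_j = Phi_j^-1 Delta_(j+1)^-1 Phi_j.
  On the shifted side, Delta_k - Delta^(mu)_k is the Schur complement of T_(k-1) - mu I in
  T_k - mu I, so its inverse is the last diagonal block of (T_k - mu I)^-1 and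
  Delta^(mu)_(k+1) = mu I + Gamma_k (Delta_k - Delta^(mu)_k)^-1 Gamma_k^T - Gamma_k Delta_k^-1 Gamma_k^T.
  Substituting, mu (Upsilon^(mu)_(k-1) - Upsilon_(k-1)) + Xi_k factors as
  (Upsilon^(mu)_(k-1) - Upsilon_(k-1)) Phi_k^-1 Delta^(mu)_(k+1) Phi_k, which is the recurrence;
  multiplying by R_(k-1)^T R_(k-1) on the left gives the Theta form.
*)

section \<open>Inverses of square matrices\<close>

declare minus_carrier_mat[simp]

lemma minv_eq_right_inverse:
  fixes A B :: "real mat"
  assumes A: "A \<in> carrier_mat m m" and B: "B \<in> carrier_mat m m" and AB: "A * B = 1\<^sub>m m"
  shows invertible_mat_right_inverse: "invertible_mat A" and "minv A = B"
proof -
  have BA: "B * A = 1\<^sub>m m" by (rule mat_mult_left_right_inverse[OF A B AB])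
  show "invertible_mat A"
    unfolding invertible_mat_def inverts_mat_def using A B AB BA by auto
  have unique: "N = B" if "N \<in> carrier_mat m m" "N * A = 1\<^sub>m m" for N
  proof -
    have "N = N * (A * B)" using that AB by simp
    also have "\<dots> = (N * A) * B" by (rule assoc_mult_mat[symmetric, OF that(1) A B])
    finally show ?thesis using that B by simp
  qed
  have "B \<in> carrier_mat (dim_row A) (dim_row A) \<and> inverts_mat A B \<and> inverts_mat B A"
    using A B AB BA unfolding inverts_mat_def by auto
  moreover have "N = B" if "N \<in> carrier_mat (dim_row A) (dim_row A) \<and> inverts_mat A N \<and> inverts_mat N A" for N
    using unique that A unfolding inverts_mat_def by auto
  ultimately show "minv A = B" unfolding minv_def by (rule some_equality)
qed

lemma minv_inverse:
  fixes A :: "real mat"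
  assumes A: "A \<in> carrier_mat m m" and inv: "invertible_mat A"
  shows "minv A \<in> carrier_mat m m" "A * minv A = 1\<^sub>m m" "minv A * A = 1\<^sub>m m"
proof -
  obtain B where AB: "A * B = 1\<^sub>m m" and BA: "B * A = 1\<^sub>m (dim_row B)"
    using inv A unfolding invertible_mat_def inverts_mat_def by auto
  have "dim_col B = m" using AB A by (metis index_mult_mat(3) index_one_mat(3))
  moreover have "dim_row B = m" using BA A by (metis carrier_matD(2) index_mult_mat(3) index_one_mat(3))
  ultimately have B: "B \<in> carrier_mat m m" by auto
  with A AB BA show "minv A \<in> carrier_mat m m" "A * minv A = 1\<^sub>m m" "minv A * A = 1\<^sub>m m"
    using minv_eq_right_inverse(2)[OF A B AB] by auto
qed

lemma invertible_mat_iff_det: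
  fixes A :: "real mat"
  assumes A: "A \<in> carrier_mat m m"
  shows "invertible_mat A \<longleftrightarrow> det A \<noteq> 0"
proof
  assume "invertible_mat A"
  then have "det A * det (minv A) = 1"
    using minv_inverse[OF A] det_mult[OF A minv_inverse(1)[OF A]] by (metis det_one)
  then show "det A \<noteq> 0" by auto
next
  assume "det A \<noteq> 0"
  then obtain B where "B \<in> carrier_mat m m" "A * B = 1\<^sub>m m"
    using det_non_zero_imp_unit[OF A, of "()"] unfolding Units_def ring_mat_def by auto
  then show "invertible_mat A" by (rule invertible_mat_right_inverse[OF A])
qed

lemma invertible_mat_if_trivial_kernel:
  fixes A :: "real mat"
  assumes A: "A \<in> carrier_mat m m"
    and ker: "\<And>v. v \<in> carrier_vec m \<Longrightarrow> A *\<^sub>v v = 0\<^sub>v m \<Longrightarrow> v = 0\<^sub>v m"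
  shows "invertible_mat A"
  unfolding invertible_mat_iff_det[OF A] det_0_iff_vec_prod_zero[OF A] using ker by auto

lemma invertible_mat_mult_iff:
  fixes A B :: "real mat"
  assumes A: "A \<in> carrier_mat m m" and B: "B \<in> carrier_mat m m"
  shows "invertible_mat (A * B) \<longleftrightarrow> invertible_mat A \<and> invertible_mat B"
  using invertible_mat_iff_det[OF A] invertible_mat_iff_det[OF B]
    invertible_mat_iff_det[OF mult_carrier_mat[OF A B]] det_mult[OF A B] by simp

section \<open>Matrix algebra under dimension side conditions\<close>

text \<open>
  Matrices do not form a ring, so the algebraic laws below carry their dimension conditions as
  premises; in this form they work as conditional simplification rules once the carriers of all
  factors are in the simpset.
\<close>

lemma mult_assoc_dims:
  "dim_col (A::'a::semiring_0 mat) = dim_row B \<Longrightarrow> dim_col B = dim_row C \<Longrightarrow> A * B * C = A * (B * C)"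
  by (rule assoc_mult_mat[of A "dim_row A" "dim_col A" B "dim_col B" C "dim_col C"]) auto

lemma mult_add_distrib_dims:
  "dim_col (A::'a::semiring_0 mat) = dim_row B \<Longrightarrow> dim_row B = dim_row C \<Longrightarrow> dim_col B = dim_col C \<Longrightarrow>
   A * (B + C) = A * B + A * C"
  by (rule mult_add_distrib_mat[of A "dim_row A" "dim_col A" B "dim_col B"]) auto

lemma add_mult_distrib_dims:
  "dim_row (A::'a::semiring_0 mat) = dim_row B \<Longrightarrow> dim_col A = dim_col B \<Longrightarrow> dim_col B = dim_row C \<Longrightarrow>
   (A + B) * C = A * C + B * C"
  by (rule add_mult_distrib_mat[of A "dim_row A" "dim_col A" B C "dim_col C"]) auto

lemma mult_minus_distrib_dims:
  "dim_col (A::'a::ring mat) = dim_row B \<Longrightarrow> dim_row B = dim_row C \<Longrightarrow> dim_col B = dim_col C \<Longrightarrow>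
   A * (B - C) = A * B - A * C"
  by (rule mult_minus_distrib_mat[of A "dim_row A" "dim_col A" B "dim_col B"]) auto

lemma minus_mult_distrib_dims:
  "dim_row (A::'a::ring mat) = dim_row B \<Longrightarrow> dim_col A = dim_col B \<Longrightarrow> dim_col B = dim_row C \<Longrightarrow>
   (A - B) * C = A * C - B * C"
  by (rule minus_mult_distrib_mat[of A "dim_row A" "dim_col A" B C "dim_col C"]) auto

lemma transpose_mult_dims:
  "dim_col (A::'a::comm_semiring_0 mat) = dim_row B \<Longrightarrow> (A * B)\<^sup>T = B\<^sup>T * A\<^sup>T"
  by (rule transpose_mult[of A "dim_row A" "dim_col A" B "dim_col B"]) auto

lemma transpose_add_dims:
  "dim_row (A::'a::ab_semigroup_add mat) = dim_row B \<Longrightarrow> dim_col A = dim_col B \<Longrightarrow> (A + B)\<^sup>T = A\<^sup>T + B\<^sup>T"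
  by (rule eq_matI) auto

lemma transpose_minus_dims:
  "dim_row (A::'a::ab_group_add mat) = dim_row B \<Longrightarrow> dim_col A = dim_col B \<Longrightarrow> (A - B)\<^sup>T = A\<^sup>T - B\<^sup>T"
  by (rule eq_matI) auto

lemma transpose_smult_mat: "(c \<cdot>\<^sub>m (A::'a::comm_semiring_0 mat))\<^sup>T = c \<cdot>\<^sub>m A\<^sup>T"
  by (rule eq_matI) auto

lemma smult_mult_dims:
  "dim_col (A::'a::comm_semiring_0 mat) = dim_row B \<Longrightarrow> (c \<cdot>\<^sub>m A) * B = c \<cdot>\<^sub>m (A * B)"
  by (rule eq_matI) auto

lemma mult_smult_dims:
  "dim_col (A::'a::comm_semiring_0 mat) = dim_row B \<Longrightarrow> A * (c \<cdot>\<^sub>m B) = c \<cdot>\<^sub>m (A * B)"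
  by (rule eq_matI) auto

lemma smult_smult_mat: "c \<cdot>\<^sub>m (d \<cdot>\<^sub>m (A :: 'a::semiring_0 mat)) = (c * d) \<cdot>\<^sub>m A"
  by (rule eq_matI) (auto simp: mult.assoc)

lemma smult_one_mat: "1 \<cdot>\<^sub>m (A :: 'a::semiring_1 mat) = A"
  by (rule eq_matI) auto

lemmas mat_dims_simps = mult_assoc_dims mult_add_distrib_dims add_mult_distrib_dims
  mult_minus_distrib_dims minus_mult_distrib_dims transpose_mult_dims transpose_add_dims
  transpose_minus_dims transpose_smult_mat smult_mult_dims mult_smult_dims

lemma mult_cancel_inverse:
  "A * B = 1\<^sub>m k \<Longrightarrow> dim_col (A::'a::semiring_1 mat) = dim_row B \<Longrightarrow> dim_col B = dim_row C \<Longrightarrow>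
   A * (B * C) = C"
proof -
  assume AB: "A * B = 1\<^sub>m k" and dims: "dim_col A = dim_row B" "dim_col B = dim_row C"
  then have "dim_row C = k" using index_mult_mat(3)[of A B] by simp
  then show ?thesis using AB dims by (simp flip: mult_assoc_dims)
qed

lemma smult_mat_mult_vec:
  "v \<in> carrier_vec (dim_col A) \<Longrightarrow> (c \<cdot>\<^sub>m (A :: 'a::comm_semiring_0 mat)) *\<^sub>v v = c \<cdot>\<^sub>v (A *\<^sub>v v)"
  by (rule eq_vecI) (auto simp: scalar_prod_def sum_distrib_left mult.assoc intro!: sum.cong)

lemma minus_eq_add_if_add_eq_zero:
  fixes X Y Z :: "'a::ab_group_add mat"
  assumes "X \<in> carrier_mat a b" "Y \<in> carrier_mat a b" "Z \<in> carrier_mat a b"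
    and "X + Y = 0\<^sub>m a b"
  shows "Z - Y = Z + X"
proof (rule eq_matI)
  fix i j assume "i < dim_row (Z + X)" "j < dim_col (Z + X)"
  then have ij: "i < a" "j < b" using assms by auto
  have "(X + Y) $$ (i, j) = 0\<^sub>m a b $$ (i, j)" using assms(4) by simp
  then have "X $$ (i, j) = - Y $$ (i, j)" using ij assms(1,2) by (simp add: eq_neg_iff_add_eq_0)
  then show "(Z - Y) $$ (i, j) = (Z + X) $$ (i, j)" using ij assms(1-3) by simp
qed (use assms in auto)

lemma diff_minus_diff_mat:
  fixes X Y Z W :: "real mat"
  assumes "X \<in> carrier_mat a b" "Y \<in> carrier_mat a b" "Z \<in> carrier_mat a b" "W \<in> carrier_mat a b"
  shows "(X - Z) - ((W + Y) - Z) = (X - W) - Y"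
  by (rule eq_matI) (use assms in auto)

lemma eq_add_if_diff_eq:
  fixes X Y Z W :: "real mat"
  assumes "X \<in> carrier_mat a b" "Y \<in> carrier_mat a b" "Z \<in> carrier_mat a b" "W \<in> carrier_mat a b"
    and "X = (Y - Z) - W"
  shows "Y = X + W + Z"
  by (rule eq_matI) (use assms in auto)

lemma add3_minus_add_mat:
  fixes X1 X2 X3 X4 :: "real mat"
  assumes "X1 \<in> carrier_mat a b" "X2 \<in> carrier_mat a b" "X3 \<in> carrier_mat a b" "X4 \<in> carrier_mat a b"
  shows "(X1 + X2 + X3) - (X3 + X4) = (X2 - X4) + X1"
  by (rule eq_matI) (use assms in auto)

lemma add_diff_assoc_mat:
  fixes X Y Z :: "real mat"
  assumes "X \<in> carrier_mat a b" "Y \<in> carrier_mat a b" "Z \<in> carrier_mat a b"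
  shows "X + Y - Z = X + (Y - Z)"
  by (rule eq_matI) (use assms in auto)

lemma smult_diff_smult_add_mat:
  fixes X Y :: "real mat"
  assumes "X \<in> carrier_mat a b" "Y \<in> carrier_mat a b"
  shows "c \<cdot>\<^sub>m X - c \<cdot>\<^sub>m (X + Y) = (- c) \<cdot>\<^sub>m Y"
  by (rule eq_matI) (use assms in \<open>auto simp: algebra_simps\<close>)

lemma smult_add_neg_smult_mat:
  fixes X Y :: "real mat"
  assumes "X \<in> carrier_mat a b" "Y \<in> carrier_mat a b"
  shows "(- c) \<cdot>\<^sub>m X + c \<cdot>\<^sub>m Y = (- c) \<cdot>\<^sub>m (X - Y)"
  by (rule eq_matI) (use assms in \<open>auto simp: algebra_simps\<close>)

lemma minv_mult:
  fixes A B :: "real mat"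
  assumes A: "A \<in> carrier_mat m m" and B: "B \<in> carrier_mat m m"
    and iA: "invertible_mat A" and iB: "invertible_mat B"
  shows "minv (A * B) = minv B * minv A"
proof -
  note a = minv_inverse[OF A iA] and b = minv_inverse[OF B iB]
  have "(A * B) * (minv B * minv A) = 1\<^sub>m m"
    using A B a b by (simp add: mat_dims_simps mult_cancel_inverse[OF b(2)])
  then show ?thesis using A B a b by (intro minv_eq_right_inverse(2)) auto
qed

lemma minv_transpose:
  fixes A :: "real mat"
  assumes A: "A \<in> carrier_mat m m" and iA: "invertible_mat A"
  shows "invertible_mat A\<^sup>T" "minv A\<^sup>T = (minv A)\<^sup>T"
proof -
  note a = minv_inverse[OF A iA]
  have "A\<^sup>T * (minv A)\<^sup>T = 1\<^sub>m m"
    using transpose_mult[OF a(1) A] a by simp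
  then show "invertible_mat A\<^sup>T" "minv A\<^sup>T = (minv A)\<^sup>T"
    using A a minv_eq_right_inverse[of "A\<^sup>T" m "(minv A)\<^sup>T"] by auto
qed

lemma minv_minv:
  fixes A :: "real mat"
  assumes A: "A \<in> carrier_mat m m" and iA: "invertible_mat A"
  shows "invertible_mat (minv A)" "minv (minv A) = A"
  using minv_eq_right_inverse[OF minv_inverse(1)[OF A iA] A minv_inverse(3)[OF A iA]] by auto

lemma minv_sym:
  fixes A :: "real mat"
  assumes A: "A \<in> carrier_mat m m" and iA: "invertible_mat A" and sym: "A\<^sup>T = A"
  shows "(minv A)\<^sup>T = minv A"
  using minv_transpose(2)[OF A iA] sym by simp

lemma minv_smult_one:
  fixes \<mu> :: real
  assumes "\<mu> \<noteq> 0"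
  shows "minv (\<mu> \<cdot>\<^sub>m 1\<^sub>m m) = (1 / \<mu>) \<cdot>\<^sub>m 1\<^sub>m m"
proof -
  have "(\<mu> \<cdot>\<^sub>m 1\<^sub>m m) * ((1 / \<mu>) \<cdot>\<^sub>m 1\<^sub>m m) = 1\<^sub>m m"
    using assms by (simp add: mat_dims_simps smult_smult_mat smult_one_mat)
  then show ?thesis by (rule minv_eq_right_inverse(2)[rotated 2]) auto
qed

lemma nonzero_if_invertible_smult_one:
  fixes \<mu> :: real
  assumes inv: "invertible_mat (\<mu> \<cdot>\<^sub>m 1\<^sub>m m)" and m: "m \<noteq> 0"
  shows "\<mu> \<noteq> 0"
  using inv m invertible_mat_iff_det[of "\<mu> \<cdot>\<^sub>m 1\<^sub>m m" m] by auto

lemma minv_mult_cancel_right: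
  fixes D U :: "real mat"
  assumes D: "D \<in> carrier_mat m m" "invertible_mat D" and U: "U \<in> carrier_mat m m" "invertible_mat U"
  shows "invertible_mat (D * U)" "minv (D * U) * D = minv U"
proof -
  show "invertible_mat (D * U)" using invertible_mat_mult_iff[OF D(1) U(1)] D U by simp
  show "minv (D * U) * D = minv U"
    unfolding minv_mult[OF D(1) U(1) D(2) U(2)] using minv_inverse[OF D] minv_inverse[OF U] D U
    by (simp add: mat_dims_simps)
qed

lemma minv_mult_cancel_left:
  fixes W E D :: "real mat"
  assumes W: "W \<in> carrier_mat m m" "invertible_mat W" and E: "E \<in> carrier_mat m m" "invertible_mat E"
    and D: "D \<in> carrier_mat m m"
  shows "invertible_mat (W * E)" "minv (W * E) * (W * D) = minv E * D"
proof -
  show "invertible_mat (W * E)" using invertible_mat_mult_iff[OF W(1) E(1)] W E by simp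
  show "minv (W * E) * (W * D) = minv E * D"
    unfolding minv_mult[OF W(1) E(1) W(2) E(2)] using minv_inverse[OF W] minv_inverse[OF E] W E D
    by (simp add: mat_dims_simps mult_cancel_inverse[OF minv_inverse(3)[OF W]])
qed

lemma minv_similar:
  fixes F X :: "real mat"
  assumes F: "F \<in> carrier_mat m m" "invertible_mat F" and X: "X \<in> carrier_mat m m" "invertible_mat X"
  shows "invertible_mat (minv F * X * F)" "minv (minv F * X * F) = minv F * minv X * F"
proof -
  note Fi = minv_inverse[OF F] and Fii = minv_minv[OF F]
  have FX: "minv F * X \<in> carrier_mat m m" "invertible_mat (minv F * X)"
    using invertible_mat_mult_iff[OF Fi(1) X(1)] Fii(1) X Fi(1) by auto
  show "invertible_mat (minv F * X * F)" using invertible_mat_mult_iff[OF FX(1) F(1)] FX F by simp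
  have "minv (minv F * X * F) = minv F * (minv X * minv (minv F))"
    unfolding minv_mult[OF FX(1) F(1) FX(2) F(2)] minv_mult[OF Fi(1) X(1) Fii(1) X(2)] ..
  also have "\<dots> = minv F * minv X * F"
    unfolding Fii(2) by (rule assoc_mult_mat[symmetric, OF Fi(1) minv_inverse(1)[OF X] F(1)])
  finally show "minv (minv F * X * F) = minv F * minv X * F" .
qed

section \<open>Rank, definiteness and Schur complements\<close>

lemma invertible_shift_if_not_eigenvalue:
  fixes T :: "real mat"
  assumes T: "T \<in> carrier_mat N N" and ne: "\<not> eigenvalue T \<mu>"
  shows "invertible_mat (T - \<mu> \<cdot>\<^sub>m 1\<^sub>m N)"
proof -
  have "T - \<mu> \<cdot>\<^sub>m 1\<^sub>m N = char_matrix T \<mu>"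
    unfolding char_matrix_def using T by (intro eq_matI) auto
  then show ?thesis
    using ne eigenvalue_det[OF T] invertible_mat_iff_det[of "char_matrix T \<mu>" N] T by auto
qed

lemma full_col_rank_mult_imp_invertible:
  fixes V M :: "real mat"
  assumes V: "V \<in> carrier_mat n m" and M: "M \<in> carrier_mat m m"
    and c: "c \<noteq> 0" and rank: "full_col_rank (c \<cdot>\<^sub>m (V * M))"
  shows "invertible_mat M"
proof (rule invertible_mat_if_trivial_kernel[OF M])
  fix v :: "real vec" assume v: "v \<in> carrier_vec m" and Mv: "M *\<^sub>v v = 0\<^sub>v m"
  have "(c \<cdot>\<^sub>m (V * M)) *\<^sub>v v = c \<cdot>\<^sub>v ((V * M) *\<^sub>v v)"
    using V M v by (simp add: smult_mat_mult_vec)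
  also have "\<dots> = c \<cdot>\<^sub>v (V *\<^sub>v (M *\<^sub>v v))" using V M v by simp
  also have "\<dots> = 0\<^sub>v n" unfolding Mv using V by auto
  finally show "v = 0\<^sub>v m" using rank v V M unfolding full_col_rank_def by auto
qed

lemma gram_smult_orthonormal_mult:
  fixes V M :: "real mat"
  assumes V: "V \<in> carrier_mat n m" and M: "M \<in> carrier_mat m q"
    and VV: "V\<^sup>T * V = 1\<^sub>m m" and c: "c * c = 1"
  shows "(c \<cdot>\<^sub>m (V * M))\<^sup>T * (c \<cdot>\<^sub>m (V * M)) = M\<^sup>T * M"
  using V M c by (simp add: mat_dims_simps smult_smult_mat smult_one_mat mult_cancel_inverse[OF VV])

lemma invertible_congruence_if_sym_pos:
  fixes A Z Y :: "real mat"
  assumes A: "sym_pos_def n A" and Z: "Z \<in> carrier_mat n m" and Y: "Y \<in> carrier_mat m n"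
    and YZ: "Y * Z = 1\<^sub>m m"
  shows "invertible_mat (Z\<^sup>T * (A * Z))"
proof (rule invertible_mat_if_trivial_kernel)
  have A_carrier: "A \<in> carrier_mat n n" using A unfolding sym_pos_def_def by auto
  show "Z\<^sup>T * (A * Z) \<in> carrier_mat m m" using A_carrier Z by auto
  fix v :: "real vec" assume v: "v \<in> carrier_vec m" and ker: "(Z\<^sup>T * (A * Z)) *\<^sub>v v = 0\<^sub>v m"
  define w where "w = Z *\<^sub>v v"
  have w: "w \<in> carrier_vec n" "A *\<^sub>v w \<in> carrier_vec n" unfolding w_def using A_carrier Z v by auto
  have "Z\<^sup>T *\<^sub>v (A *\<^sub>v w) = 0\<^sub>v m"
    using ker Z A_carrier v unfolding w_def by (simp add: assoc_mult_mat_vec[of _ m n _ m])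
  then have "(A *\<^sub>v w) \<bullet> w = 0"
    using transpose_vec_mult_scalar[OF Z v w(2)] v unfolding w_def by simp
  then have "w = 0\<^sub>v n"
    using A w comm_scalar_prod[OF w(2,1)] unfolding sym_pos_def_def by force
  then have "Y *\<^sub>v w = 0\<^sub>v m" using Y by (intro eq_vecI) auto
  moreover have "Y *\<^sub>v w = v"
    using YZ Y Z v unfolding w_def by (simp flip: assoc_mult_mat_vec[OF Y Z v])
  ultimately show "v = 0\<^sub>v m" by simp
qed

lemma four_block_mat_eqD:
  assumes eq: "four_block_mat A B C D = four_block_mat A' B' C' D'"
    and A: "A \<in> carrier_mat nr nc" "A' \<in> carrier_mat nr nc"
    and B: "B \<in> carrier_mat nr nc'" "B' \<in> carrier_mat nr nc'"
    and C: "C \<in> carrier_mat nr' nc" "C' \<in> carrier_mat nr' nc"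
    and D: "D \<in> carrier_mat nr' nc'" "D' \<in> carrier_mat nr' nc'"
  shows "B = B'" "D = D'"
proof -
  have entry: "four_block_mat A B C D $$ (i, j) = four_block_mat A' B' C' D' $$ (i, j)" for i j
    using eq by simp
  show "B = B'"
  proof (rule eq_matI)
    fix i j assume "i < dim_row B'" "j < dim_col B'"
    then show "B $$ (i, j) = B' $$ (i, j)" using entry[of i "j + nc"] A B D by auto
  qed (use B in auto)
  show "D = D'"
  proof (rule eq_matI)
    fix i j assume "i < dim_row D'" "j < dim_col D'"
    then show "D $$ (i, j) = D' $$ (i, j)" using entry[of "i + nr" "j + nc"] A D by auto
  qed (use D in auto)
qed

lemma schur_complement_inverse:
  fixes M P Q C D :: "real mat"
  assumes P: "P \<in> carrier_mat N N" and Q: "Q \<in> carrier_mat N m"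
    and C: "C \<in> carrier_mat m N" and D: "D \<in> carrier_mat m m"
    and M: "M = four_block_mat P Q C D" and iP: "invertible_mat P" and iM: "invertible_mat M"
  shows "invertible_mat (D - C * (minv P * Q))"
    "minv (D - C * (minv P * Q)) = mat m m (\<lambda>(i, j). minv M $$ (i + N, j + N))"
proof -
  have M_carrier: "M \<in> carrier_mat (N + m) (N + m)" unfolding M using P D by auto
  note Mi = minv_inverse[OF M_carrier iM] and Pi = minv_inverse[OF P iP]
  obtain N1 N2 N3 N4 where split: "split_block (minv M) N N = (N1, N2, N3, N4)"
    by (cases "split_block (minv M) N N") auto
  note blocks = split_block[OF split, of m m]
  have N: "N1 \<in> carrier_mat N N" "N2 \<in> carrier_mat N m" "N3 \<in> carrier_mat m N"
    "N4 \<in> carrier_mat m m" "minv M = four_block_mat N1 N2 N3 N4"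
    using blocks Mi by auto
  have N4: "N4 = mat m m (\<lambda>(i, j). minv M $$ (i + N, j + N))"
    using split Mi unfolding split_block_def Let_def by auto
  have "M * four_block_mat N1 N2 N3 N4 = four_block_mat (P * N1 + Q * N3) (P * N2 + Q * N4)
      (C * N1 + D * N3) (C * N2 + D * N4)"
    unfolding M by (rule mult_four_block_mat[OF P Q C D N(1-4)])
  then have blocks_eq: "four_block_mat (P * N1 + Q * N3) (P * N2 + Q * N4) (C * N1 + D * N3)
      (C * N2 + D * N4) = four_block_mat (1\<^sub>m N) (0\<^sub>m N m) (0\<^sub>m m N) (1\<^sub>m m)"
    using Mi(2) unfolding N(5) four_block_one_mat by simp
  have right_col: "P * N2 + Q * N4 = 0\<^sub>m N m" "C * N2 + D * N4 = 1\<^sub>m m"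
    by (rule four_block_mat_eqD[OF blocks_eq, where nr = N and nc = N and nr' = m and nc' = m],
        use P Q C D N in auto)+
  define X where "X = minv P * (Q * N4)"
  have X: "X \<in> carrier_mat N m" unfolding X_def using Pi Q N by auto
  have "N2 + X = minv P * (P * N2 + Q * N4)"
    unfolding X_def using Pi P Q N by (simp add: mat_dims_simps mult_cancel_inverse[OF Pi(3)])
  then have "C * N2 + C * X = 0\<^sub>m m m"
    using right_col(1) C N X Pi by (simp flip: mult_add_distrib_mat[OF C N(2) X])
  then have "(D - C * (minv P * Q)) * N4 = D * N4 + C * N2"
    unfolding X_def[symmetric] using D C Q N X Pi
    by (simp add: mat_dims_simps minus_eq_add_if_add_eq_zero[where a = m and b = m] X_def)
  also have "\<dots> = 1\<^sub>m m" using right_col(2) C D N by (simp add: comm_add_mat[of "D * N4" m m])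
  finally have "(D - C * (minv P * Q)) * N4 = 1\<^sub>m m" .
  moreover have "D - C * (minv P * Q) \<in> carrier_mat m m" using D C Q Pi by auto
  ultimately show "invertible_mat (D - C * (minv P * Q))"
    "minv (D - C * (minv P * Q)) = mat m m (\<lambda>(i, j). minv M $$ (i + N, j + N))"
    using minv_eq_right_inverse[OF _ N(4)] unfolding N4 by auto
qed

section \<open>The block tridiagonal matrix \<open>T\<^sub>k\<close>\<close>

lemma four_block_mat_minus_smult_one:
  fixes A B C D :: "real mat"
  assumes A: "A \<in> carrier_mat n1 n1" and B: "B \<in> carrier_mat n1 n2"
    and C: "C \<in> carrier_mat n2 n1" and D: "D \<in> carrier_mat n2 n2"
  shows "four_block_mat A B C D - \<mu> \<cdot>\<^sub>m 1\<^sub>m (n1 + n2)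
    = four_block_mat (A - \<mu> \<cdot>\<^sub>m 1\<^sub>m n1) B C (D - \<mu> \<cdot>\<^sub>m 1\<^sub>m n2)"
  by (rule eq_matI) (use A B C D in auto)

text \<open>\<open>E_blk m q\<close> is the block column \<open>E\<^sub>q = e\<^sub>q \<otimes> I\<^sub>m\<close> of the paper.\<close>

definition E_blk :: "nat \<Rightarrow> nat \<Rightarrow> real mat" where
  "E_blk m q = mat (q * m) m (\<lambda>(i, a). if i div m = q - 1 \<and> i mod m = a then 1 else 0)"

lemma E_blk_carrier: "E_blk m q \<in> carrier_mat (q * m) m"
  unfolding E_blk_def by auto

lemma E_blk_mult_index:
  assumes X: "X \<in> carrier_mat m c" and i: "i < q * m" and b: "b < c"
  shows "(E_blk m q * X) $$ (i, b) = (if i div m = q - 1 then X $$ (i mod m, b) else 0)"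
proof -
  have "(E_blk m q * X) $$ (i, b) = (\<Sum>t\<in>{0..<m}. E_blk m q $$ (i, t) * X $$ (t, b))"
    using X i b E_blk_carrier[of m q] by (simp add: scalar_prod_def)
  also have "\<dots> = (\<Sum>t\<in>{0..<m}. if t = i mod m then (if i div m = q - 1 then X $$ (t, b) else 0) else 0)"
    using i unfolding E_blk_def by (intro sum.cong) auto
  also have "\<dots> = (if i div m = q - 1 then X $$ (i mod m, b) else 0)"
  proof -
    have "0 < m" using i by (cases m) auto
    then show ?thesis by (simp add: sum.delta')
  qed
  finally show ?thesis .
qed

lemma sum_last_block_entry:
  fixes f :: "nat \<Rightarrow> real"
  assumes a: "a < m" and q: "1 \<le> q"
  shows "(\<Sum>t\<in>{0..<q * m}. if t div m = q - 1 \<and> t mod m = a then f t else 0) = f ((q - 1) * m + a)"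
proof -
  have "t div m = q - 1 \<and> t mod m = a \<longleftrightarrow> t = (q - 1) * m + a" for t
  proof
    show "t div m = q - 1 \<and> t mod m = a \<Longrightarrow> t = (q - 1) * m + a" by (metis div_mult_mod_eq)
    show "t = (q - 1) * m + a \<Longrightarrow> t div m = q - 1 \<and> t mod m = a" using a by auto
  qed
  then have "(\<Sum>t\<in>{0..<q * m}. if t div m = q - 1 \<and> t mod m = a then f t else 0)
      = (\<Sum>t\<in>{0..<q * m}. if t = (q - 1) * m + a then f t else 0)"
    by (intro sum.cong) auto
  moreover have "(q - 1) * m + a < q * m"
  proof -
    have "(q - 1) * m + a < (q - 1) * m + m" using a by simp
    also have "\<dots> = q * m" using q by (cases q) auto
    finally show ?thesis .
  qed
  ultimately show ?thesis by (simp add: sum.delta')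
qed

lemma blk_eq_E_blk:
  assumes Y: "Y \<in> carrier_mat (q * m) (q * m)" and q: "1 \<le> q"
  shows "blk m Y q q = (E_blk m q)\<^sup>T * (Y * E_blk m q)"
proof (rule eq_matI)
  fix a b assume "a < dim_row ((E_blk m q)\<^sup>T * (Y * E_blk m q))" "b < dim_col ((E_blk m q)\<^sup>T * (Y * E_blk m q))"
  then have ab: "a < m" "b < m" using E_blk_carrier[of m q] by auto
  have col: "(Y * E_blk m q) $$ (i, b) = Y $$ (i, (q - 1) * m + b)" if "i < q * m" for i
  proof -
    have "(Y * E_blk m q) $$ (i, b)
        = (\<Sum>t\<in>{0..<q * m}. if t div m = q - 1 \<and> t mod m = b then Y $$ (i, t) else 0)"
      using Y that ab E_blk_carrier[of m q] unfolding E_blk_def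
      by (auto simp: scalar_prod_def intro!: sum.cong)
    then show ?thesis using sum_last_block_entry[OF ab(2) q] by simp
  qed
  have "((E_blk m q)\<^sup>T * (Y * E_blk m q)) $$ (a, b)
      = (\<Sum>t\<in>{0..<q * m}. if t div m = q - 1 \<and> t mod m = a then Y $$ (t, (q - 1) * m + b) else 0)"
    using Y ab col E_blk_carrier[of m q] unfolding E_blk_def
    by (auto simp: scalar_prod_def intro!: sum.cong)
  also have "\<dots> = blk m Y q q $$ (a, b)"
    using sum_last_block_entry[OF ab(1) q] ab unfolding blk_def by simp
  finally show "blk m Y q q $$ (a, b) = ((E_blk m q)\<^sup>T * (Y * E_blk m q)) $$ (a, b)" ..
qed (use E_blk_carrier[of m q] in \<open>auto simp: blk_def\<close>)

lemma blk_one_one: "X \<in> carrier_mat m m \<Longrightarrow> blk m X 1 1 = X"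
  unfolding blk_def by (rule eq_matI) auto

lemma T_mat_carrier: "T_mat m Gam Om k \<in> carrier_mat (k * m) (k * m)"
  unfolding T_mat_def by auto

lemma index_T_mat:
  assumes "i < k * m" "j < k * m"
  shows "T_mat m Gam Om k $$ (i, j) = (let bi = i div m; bj = j div m; a = i mod m; b = j mod m in
     if bi = bj then Om (bi + 1) $$ (a, b)
     else if bi = bj + 1 then Gam (bj + 1) $$ (a, b)
     else if bj = bi + 1 then (Gam (bi + 1))\<^sup>T $$ (a, b)
     else 0)"
  using assms unfolding T_mat_def by simp

lemma T_mat_one:
  assumes "Om 1 \<in> carrier_mat m m"
  shows "T_mat m Gam Om 1 = Om 1"
  by (rule eq_matI) (use assms in \<open>auto simp: T_mat_def\<close>)

lemma div_mod_last_block: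
  fixes i q m :: nat
  assumes "q * m \<le> i" "i < q * m + m"
  shows "i div m = q" "i mod m = i - q * m"
proof -
  obtain r where "i = q * m + r" "r < m" using assms by (metis add_less_cancel_left le_Suc_ex)
  then show "i div m = q" "i mod m = i - q * m" by auto
qed

lemma T_mat_Suc:
  assumes q: "1 \<le> q" and Om: "Om (q + 1) \<in> carrier_mat m m" and G: "Gam q \<in> carrier_mat m m"
  shows "T_mat m Gam Om (q + 1) = four_block_mat (T_mat m Gam Om q) (E_blk m q * (Gam q)\<^sup>T)
    (E_blk m q * (Gam q)\<^sup>T)\<^sup>T (Om (q + 1))" (is "_ = ?F")
proof (rule eq_matI)
  have F: "?F \<in> carrier_mat (q * m + m) (q * m + m)"
    using T_mat_carrier[of m Gam Om q] Om by auto
  fix i j assume "i < dim_row ?F" "j < dim_col ?F"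
  then have ij: "i < q * m + m" "j < q * m + m" using F by auto
  have ij': "i < (q + 1) * m" "j < (q + 1) * m" using ij by (auto simp: algebra_simps)
  note T = index_T_mat[OF ij', of Gam Om]
  have F_index: "?F $$ (i, j) =
      (if i < q * m then if j < q * m then T_mat m Gam Om q $$ (i, j)
         else (E_blk m q * (Gam q)\<^sup>T) $$ (i, j - q * m)
       else if j < q * m then (E_blk m q * (Gam q)\<^sup>T)\<^sup>T $$ (i - q * m, j)
         else Om (q + 1) $$ (i - q * m, j - q * m))"
    using ij T_mat_carrier[of m Gam Om q] Om by (subst index_mat_four_block) auto
  consider "i < q * m" "j < q * m" | "i < q * m" "q * m \<le> j" | "q * m \<le> i" "j < q * m"
    | "q * m \<le> i" "q * m \<le> j" by linarith
  then show "T_mat m Gam Om (q + 1) $$ (i, j) = ?F $$ (i, j)"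
  proof cases
    case 1
    then show ?thesis unfolding F_index T using index_T_mat[of i q m j Gam Om] by simp
  next
    case 2
    have "i div m < q" using 2 by (simp add: less_mult_imp_div_less)
    moreover note div_mod_last_block[of q m j]
    moreover have "j - q * m < m" using 2 ij by linarith
    ultimately show ?thesis
      unfolding F_index T using 2 ij q E_blk_mult_index[of "(Gam q)\<^sup>T" m m i q] G
      by (auto simp: Let_def)
  next
    case 3
    have "j div m < q" using 3 by (simp add: less_mult_imp_div_less)
    moreover note div_mod_last_block[of q m i]
    moreover have "i - q * m < m" using 3 ij by linarith
    ultimately show ?thesis
      unfolding F_index T using 3 ij q E_blk_mult_index[of "(Gam q)\<^sup>T" m m j q] G E_blk_carrier[of m q]
      by (auto simp: Let_def)
  next
    case 4
    then show ?thesis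
      unfolding F_index T using ij div_mod_last_block[of q m i] div_mod_last_block[of q m j]
      by (auto simp: Let_def)
  qed
qed (use Om in \<open>simp_all add: T_mat_def algebra_simps\<close>)

lemma Delta_Suc: "1 \<le> i \<Longrightarrow> Delta Gam Om (i + 1) = Om (i + 1) - Gam i * minv (Delta Gam Om i) * (Gam i)\<^sup>T"
  by (cases i) auto

lemma schur_complement_T_mat_shift:
  fixes Gam Om :: "nat \<Rightarrow> real mat"
  assumes q: "1 \<le> q" and Om: "Om (q + 1) \<in> carrier_mat m m" and G: "Gam q \<in> carrier_mat m m"
    and Tq: "invertible_mat (T_mat m Gam Om q - \<mu> \<cdot>\<^sub>m 1\<^sub>m (q * m))"
    and Tq': "invertible_mat (T_mat m Gam Om (q + 1) - \<mu> \<cdot>\<^sub>m 1\<^sub>m ((q + 1) * m))"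
  defines "S \<equiv> blk m (minv (T_mat m Gam Om q - \<mu> \<cdot>\<^sub>m 1\<^sub>m (q * m))) q q"
  shows "invertible_mat (Om (q + 1) - \<mu> \<cdot>\<^sub>m 1\<^sub>m m - Gam q * S * (Gam q)\<^sup>T)"
    "minv (Om (q + 1) - \<mu> \<cdot>\<^sub>m 1\<^sub>m m - Gam q * S * (Gam q)\<^sup>T)
      = blk m (minv (T_mat m Gam Om (q + 1) - \<mu> \<cdot>\<^sub>m 1\<^sub>m ((q + 1) * m))) (q + 1) (q + 1)"
proof -
  define P where "P = T_mat m Gam Om q - \<mu> \<cdot>\<^sub>m 1\<^sub>m (q * m)"
  define Q where "Q = E_blk m q * (Gam q)\<^sup>T"
  have P: "P \<in> carrier_mat (q * m) (q * m)" "invertible_mat P"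
    unfolding P_def using T_mat_carrier[of m Gam Om q] Tq by auto
  have Q: "Q \<in> carrier_mat (q * m) m" unfolding Q_def using E_blk_carrier[of m q] G by auto
  have Om_shift: "Om (q + 1) - \<mu> \<cdot>\<^sub>m 1\<^sub>m m \<in> carrier_mat m m" using Om by auto
  have T_blocks: "T_mat m Gam Om (q + 1) - \<mu> \<cdot>\<^sub>m 1\<^sub>m (q * m + m)
      = four_block_mat P Q Q\<^sup>T (Om (q + 1) - \<mu> \<cdot>\<^sub>m 1\<^sub>m m)"
    unfolding P_def Q_def T_mat_Suc[where Om = Om and Gam = Gam, OF q Om G]
    by (rule four_block_mat_minus_smult_one[OF T_mat_carrier Q[unfolded Q_def] _ Om])
      (use Q[unfolded Q_def] in auto)
  have T_eq: "T_mat m Gam Om (q + 1) - \<mu> \<cdot>\<^sub>m 1\<^sub>m ((q + 1) * m)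
      = T_mat m Gam Om (q + 1) - \<mu> \<cdot>\<^sub>m 1\<^sub>m (q * m + m)"
    by (simp add: algebra_simps)
  note schur = schur_complement_inverse[OF P(1) Q transpose_carrier_mat[THEN iffD2, OF Q] Om_shift
      T_blocks P(2) Tq'[unfolded T_eq]]
  have "Q\<^sup>T * (minv P * Q) = Gam q * S * (Gam q)\<^sup>T"
    unfolding S_def P_def[symmetric] blk_eq_E_blk[OF minv_inverse(1)[OF P] q] Q_def
    using E_blk_carrier[of m q] G minv_inverse(1)[OF P] by (simp add: mat_dims_simps)
  moreover have "blk m (minv (T_mat m Gam Om (q + 1) - \<mu> \<cdot>\<^sub>m 1\<^sub>m ((q + 1) * m))) (q + 1) (q + 1)
      = mat m m (\<lambda>(i, j). minv (T_mat m Gam Om (q + 1) - \<mu> \<cdot>\<^sub>m 1\<^sub>m (q * m + m)) $$ (i + q * m, j + q * m))"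
    unfolding blk_def T_eq by (rule eq_matI) (auto simp: add.commute)
  ultimately show "invertible_mat (Om (q + 1) - \<mu> \<cdot>\<^sub>m 1\<^sub>m m - Gam q * S * (Gam q)\<^sup>T)"
    "minv (Om (q + 1) - \<mu> \<cdot>\<^sub>m 1\<^sub>m m - Gam q * S * (Gam q)\<^sup>T)
      = blk m (minv (T_mat m Gam Om (q + 1) - \<mu> \<cdot>\<^sub>m 1\<^sub>m ((q + 1) * m))) (q + 1) (q + 1)"
    using schur by simp_all
qed

lemma Delta_minus_Delta_mu_inverse:
  fixes Gam Om :: "nat \<Rightarrow> real mat"
  assumes k: "1 \<le> k"
    and Tk: "invertible_mat (T_mat m Gam Om k - \<mu> \<cdot>\<^sub>m 1\<^sub>m (k * m))"
    and Tk': "2 \<le> k \<Longrightarrow> invertible_mat (T_mat m Gam Om (k - 1) - \<mu> \<cdot>\<^sub>m 1\<^sub>m ((k - 1) * m))"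
    and Om: "Om k \<in> carrier_mat m m" and G: "Gam (k - 1) \<in> carrier_mat m m"
    and D: "2 \<le> k \<Longrightarrow> minv (Delta Gam Om (k - 1)) \<in> carrier_mat m m"
  shows "invertible_mat (Delta Gam Om k - Delta_mu m Gam Om \<mu> k) \<and>
    minv (Delta Gam Om k - Delta_mu m Gam Om \<mu> k) = blk m (minv (T_mat m Gam Om k - \<mu> \<cdot>\<^sub>m 1\<^sub>m (k * m))) k k"
proof (cases "k = 1")
  case True
  have T1: "T_mat m Gam Om k - \<mu> \<cdot>\<^sub>m 1\<^sub>m (k * m) \<in> carrier_mat m m"
    using T_mat_carrier[of m Gam Om k] True by auto
  have "Delta Gam Om k - Delta_mu m Gam Om \<mu> k = T_mat m Gam Om k - \<mu> \<cdot>\<^sub>m 1\<^sub>m (k * m)"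
    using True T_mat_one[of Om m Gam] Om by (simp add: Delta_mu_def)
  then show ?thesis using Tk True blk_one_one[OF minv_inverse(1)[OF T1 Tk]] by simp
next
  case False
  define q where "q = k - 1"
  have q: "1 \<le> q" "k = q + 1" using k False unfolding q_def by auto
  then have k2: "2 \<le> k" by simp
  define S where "S = blk m (minv (T_mat m Gam Om q - \<mu> \<cdot>\<^sub>m 1\<^sub>m (q * m))) q q"
  have Gq: "Gam q \<in> carrier_mat m m" "minv (Delta Gam Om q) \<in> carrier_mat m m"
    using G D[OF k2] q(2) by auto
  have Om': "Om (q + 1) \<in> carrier_mat m m" using Om q(2) by simp
  have S: "S \<in> carrier_mat m m" unfolding S_def blk_def by auto
  have "Delta Gam Om k = Om (q + 1) - Gam q * minv (Delta Gam Om q) * (Gam q)\<^sup>T"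
    unfolding q(2) by (rule Delta_Suc[OF q(1)])
  moreover have "Delta_mu m Gam Om \<mu> k
      = (\<mu> \<cdot>\<^sub>m 1\<^sub>m m + Gam q * S * (Gam q)\<^sup>T) - Gam q * minv (Delta Gam Om q) * (Gam q)\<^sup>T"
    unfolding Delta_mu_def Om_mu_def S_def using q by simp
  ultimately have "Delta Gam Om k - Delta_mu m Gam Om \<mu> k = Om (q + 1) - \<mu> \<cdot>\<^sub>m 1\<^sub>m m - Gam q * S * (Gam q)\<^sup>T"
    using diff_minus_diff_mat[where a = m and b = m] Om' Gq S by simp
  then show ?thesis
    using schur_complement_T_mat_shift[where Om = Om and Gam = Gam, OF q(1) Om' Gq(1)] Tk'[OF k2] Tk q(2)
    unfolding S_def by simp
qed

section \<open>The shifted update in closed form\<close>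

text \<open>
  With \<open>c = a - b\<close>, the identity rests on \<open>(b\<^sup>-\<^sup>1 - a\<^sup>-\<^sup>1) a = b\<^sup>-\<^sup>1 c\<close> and
  \<open>b\<^sup>-\<^sup>1 c (c\<^sup>-\<^sup>1 - a\<^sup>-\<^sup>1) = a\<^sup>-\<^sup>1\<close>.
\<close>

lemma shifted_update_core:
  fixes a b G d :: "real mat"
  assumes a: "a \<in> carrier_mat m m" "invertible_mat a" and b: "b \<in> carrier_mat m m" "invertible_mat b"
    and c: "invertible_mat (a - b)" and G: "G \<in> carrier_mat m m" "invertible_mat G"
    and d: "d = \<mu> \<cdot>\<^sub>m 1\<^sub>m m + G * minv (a - b) * G\<^sup>T - G * minv a * G\<^sup>T"
  shows "(minv b - minv a) * (a * (minv G * d * G) * minv a)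
    = \<mu> \<cdot>\<^sub>m (minv b - minv a) + minv a * (G\<^sup>T * G) * minv a"
proof -
  define c where "c = a - b"
  have ab: "c \<in> carrier_mat m m" "invertible_mat c" unfolding c_def using a b c by auto
  note ai = minv_inverse[OF a] and bi = minv_inverse[OF b] and ci = minv_inverse[OF ab]
    and Gi = minv_inverse[OF G]
  define H where "H = G\<^sup>T * G"
  define N where "N = minv b - minv a"
  define X where "X = minv c - minv a"
  have H: "H \<in> carrier_mat m m" and N: "N \<in> carrier_mat m m" and X: "X \<in> carrier_mat m m"
    unfolding H_def N_def X_def using G ai bi ci by auto
  have "minv G * d * G = \<mu> \<cdot>\<^sub>m 1\<^sub>m m + (minv c * H - minv a * H)"
    unfolding d H_def c_def[symmetric] using a ab G ai ci Gi
    by (simp add: mat_dims_simps mult_cancel_inverse[OF Gi(3)] add_diff_assoc_mat[where a = m and b = m])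
  also have "minv c * H - minv a * H = X * H"
    unfolding X_def using H ai ci by (simp add: mat_dims_simps)
  finally have "a * (minv G * d * G) * minv a = \<mu> \<cdot>\<^sub>m 1\<^sub>m m + a * (X * (H * minv a))"
    using a ai H X by (simp add: mat_dims_simps)
  then have "N * (a * (minv G * d * G) * minv a) = \<mu> \<cdot>\<^sub>m N + (N * a) * X * (H * minv a)"
    using a ai H X N by (simp add: mat_dims_simps)
  also have "(N * a) * X = minv a"
  proof -
    have "N * a = minv b * c"
      unfolding N_def c_def using a b ai bi by (simp add: mat_dims_simps)
    then have "(N * a) * X = minv b - minv b * c * minv a"
      unfolding X_def using ab bi ai ci by (simp add: mat_dims_simps mult_cancel_inverse[OF ci(2)])
    also have "minv b * c * minv a = minv b - minv a"
      unfolding c_def using a b ai bi by (simp add: mat_dims_simps mult_cancel_inverse[OF ai(2)])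
    finally show ?thesis using ai bi by (intro eq_matI) auto
  qed
  finally show ?thesis unfolding N_def H_def using ai G by (simp add: mat_dims_simps)
qed

lemma shifted_update_identity:
  fixes a b G F0 d :: "real mat"
  assumes a: "a \<in> carrier_mat m m" "a\<^sup>T = a" "invertible_mat a"
    and b: "b \<in> carrier_mat m m" "invertible_mat b" and c: "invertible_mat (a - b)"
    and G: "G \<in> carrier_mat m m" "invertible_mat G" and F0: "F0 \<in> carrier_mat m m" "invertible_mat F0"
    and d: "d = \<mu> \<cdot>\<^sub>m 1\<^sub>m m + G * minv (a - b) * G\<^sup>T - G * minv a * G\<^sup>T"
  defines "F1 \<equiv> G * minv a * F0" and "D \<equiv> minv F0 * minv b * F0 - minv F0 * minv a * F0"
  shows "\<mu> \<cdot>\<^sub>m D + minv (F0\<^sup>T * F0) * (F1\<^sup>T * F1) = D * (minv F1 * d * F1)"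
proof -
  note ai = minv_inverse[OF a(1,3)] and bi = minv_inverse[OF b] and Gi = minv_inverse[OF G]
    and Fi = minv_inverse[OF F0]
  define N where "N = minv b - minv a"
  define K where "K = minv a * (G\<^sup>T * G) * minv a"
  have N: "N \<in> carrier_mat m m" and K: "K \<in> carrier_mat m m"
    unfolding N_def K_def using ai bi G by auto
  have d_carrier: "d \<in> carrier_mat m m" unfolding d using G ai minv_inverse(1)[OF _ c] a b by auto
  have D: "D = minv F0 * N * F0" unfolding D_def N_def using Fi ai bi F0 by (simp add: mat_dims_simps)
  have "minv (F0\<^sup>T * F0) = minv F0 * (minv F0)\<^sup>T"
    using minv_mult[of "F0\<^sup>T" m F0] minv_transpose[OF F0] F0 by simp
  moreover have "F1\<^sup>T * F1 = F0\<^sup>T * (K * F0)"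
    unfolding F1_def K_def using minv_sym[OF a(1,3,2)] G ai F0 by (simp add: mat_dims_simps)
  moreover have "(minv F0)\<^sup>T * F0\<^sup>T = 1\<^sub>m m" using Fi F0 by (simp flip: transpose_mult_dims)
  ultimately have "minv (F0\<^sup>T * F0) * (F1\<^sup>T * F1) = minv F0 * K * F0"
    using Fi F0 K by (simp add: mat_dims_simps mult_cancel_inverse)
  then have lhs: "\<mu> \<cdot>\<^sub>m D + minv (F0\<^sup>T * F0) * (F1\<^sup>T * F1) = minv F0 * (\<mu> \<cdot>\<^sub>m N + K) * F0"
    unfolding D using Fi F0 N K by (simp add: mat_dims_simps)
  have core: "\<mu> \<cdot>\<^sub>m N + K = N * (a * (minv G * d * G) * minv a)"
    unfolding N_def K_def by (rule shifted_update_core[OF a(1,3) b c G d, symmetric])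
  have "minv F1 = minv F0 * (a * minv G)"
    unfolding F1_def using minv_mult[of "G * minv a" m F0] minv_mult[OF G(1) ai(1) G(2) minv_minv(1)[OF a(1,3)]]
      minv_minv(2)[OF a(1,3)] invertible_mat_mult_iff[OF G(1) ai(1)] minv_minv(1)[OF a(1,3)] G ai F0 Gi Fi
    by (simp add: mat_dims_simps)
  then have rhs: "D * (minv F1 * d * F1) = minv F0 * (N * (a * (minv G * d * G) * minv a)) * F0"
    unfolding D F1_def using Fi F0 N a ai G Gi d_carrier
    by (simp add: mat_dims_simps mult_cancel_inverse[OF Fi(2)])
  show ?thesis unfolding lhs core rhs ..
qed

lemma shifted_Ups_recurrence:
  fixes a b G F0 d :: "real mat"
  assumes a: "a \<in> carrier_mat m m" "a\<^sup>T = a" "invertible_mat a"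
    and b: "b \<in> carrier_mat m m" "invertible_mat b" and c: "invertible_mat (a - b)"
    and G: "G \<in> carrier_mat m m" "invertible_mat G" and F0: "F0 \<in> carrier_mat m m" "invertible_mat F0"
    and d: "d = \<mu> \<cdot>\<^sub>m 1\<^sub>m m + G * minv (a - b) * G\<^sup>T - G * minv a * G\<^sup>T" "invertible_mat d"
  defines "F1 \<equiv> G * minv a * F0" and "U \<equiv> minv F0 * minv a * F0" and "U\<^sub>\<mu> \<equiv> minv F0 * minv b * F0"
    and "W \<equiv> F0\<^sup>T * F0"
  shows "invertible_mat (\<mu> \<cdot>\<^sub>m (U\<^sub>\<mu> - U) + minv W * (F1\<^sup>T * F1))
    \<and> minv F1 * minv d * F1 = minv (\<mu> \<cdot>\<^sub>m (U\<^sub>\<mu> - U) + minv W * (F1\<^sup>T * F1)) * (U\<^sub>\<mu> - U)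
    \<and> invertible_mat (\<mu> \<cdot>\<^sub>m (W * U\<^sub>\<mu> - W * U) + F1\<^sup>T * F1)
    \<and> minv F1 * minv d * F1 = minv (\<mu> \<cdot>\<^sub>m (W * U\<^sub>\<mu> - W * U) + F1\<^sup>T * F1) * (W * U\<^sub>\<mu> - W * U)"
proof -
  note ai = minv_inverse[OF a(1,3)] and bi = minv_inverse[OF b] and Fi = minv_inverse[OF F0]
  have ab: "a - b \<in> carrier_mat m m" using a b by auto
  have F1: "F1 \<in> carrier_mat m m" "invertible_mat F1"
    unfolding F1_def using invertible_mat_mult_iff G ai F0 minv_minv(1)[OF a(1,3)] by auto
  have d_carrier: "d \<in> carrier_mat m m" unfolding d(1) using G ai minv_inverse(1)[OF ab c] by auto
  define D where "D = U\<^sub>\<mu> - U"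
  define E where "E = \<mu> \<cdot>\<^sub>m D + minv W * (F1\<^sup>T * F1)"
  have D_carrier: "D \<in> carrier_mat m m" unfolding D_def U_def U\<^sub>\<mu>_def using Fi ai bi F0 by auto
  have "D = minv F0 * (minv b - minv a) * F0"
    unfolding D_def U_def U\<^sub>\<mu>_def using Fi ai bi F0 by (simp add: mat_dims_simps)
  also have "minv b - minv a = minv b * (a - b) * minv a"
    using a b ai bi by (simp add: mat_dims_simps mult_cancel_inverse[OF bi(3)])
  finally have "D = minv F0 * (minv b * (a - b) * minv a) * F0" .
  moreover have "invertible_mat (minv b * (a - b) * minv a)"
    using invertible_mat_mult_iff[OF mult_carrier_mat[OF bi(1) ab] ai(1)]
      invertible_mat_mult_iff[OF bi(1) ab] c minv_minv(1)[OF a(1,3)] minv_minv(1)[OF b] by simp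
  ultimately have D_inv: "invertible_mat D"
    using minv_similar(1)[OF F0] bi(1) ab ai(1) by auto
  note similar = minv_similar[OF F1 d_carrier d(2)]
  have E: "E = D * (minv F1 * d * F1)"
    unfolding E_def D_def U_def U\<^sub>\<mu>_def W_def F1_def by (rule shifted_update_identity[OF a b c G F0 d(1)])
  have "minv F1 * d * F1 \<in> carrier_mat m m" using minv_inverse(1)[OF F1] d_carrier F1 by auto
  note cancel = minv_mult_cancel_right[OF D_carrier D_inv this similar(1)]
  have E_inv: "invertible_mat E" and Ups: "minv F1 * minv d * F1 = minv E * D"
    unfolding E using cancel similar(2) by auto
  have W: "W \<in> carrier_mat m m" "invertible_mat W"
    unfolding W_def using invertible_mat_mult_iff[of "F0\<^sup>T" m F0] minv_transpose[OF F0] F0 by auto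
  have E_carrier: "E \<in> carrier_mat m m" unfolding E_def using D_carrier W F1 minv_inverse(1)[OF W] by auto
  have "\<mu> \<cdot>\<^sub>m (W * U\<^sub>\<mu> - W * U) + F1\<^sup>T * F1 = W * E"
    unfolding E_def D_def U_def U\<^sub>\<mu>_def using W minv_inverse[OF W] Fi ai bi F0 F1
    by (simp add: mat_dims_simps mult_cancel_inverse[OF minv_inverse(2)[OF W]])
  moreover have "W * U\<^sub>\<mu> - W * U = W * D"
    unfolding D_def U_def U\<^sub>\<mu>_def using W Fi ai bi F0 by (simp add: mat_dims_simps)
  ultimately show ?thesis
    using E_inv Ups minv_mult_cancel_left[OF W E_carrier E_inv D_carrier] unfolding E_def D_def by simp
qed

lemma Ups_mu_0:
  fixes \<mu> :: real
  assumes G: "Gam 0 \<in> carrier_mat m m" "invertible_mat (Gam 0)"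
    and inv: "invertible_mat (\<mu> \<cdot>\<^sub>m 1\<^sub>m m)"
  shows "Ups_mu m Gam Om \<mu> 0 = (1 / \<mu>) \<cdot>\<^sub>m 1\<^sub>m m"
proof (cases "m = 0")
  case True
  then show ?thesis
    unfolding Ups_mu_def using minv_inverse(1)[OF G] G by (intro eq_matI) auto
next
  case False
  then have "minv (Delta_mu m Gam Om \<mu> 1) = (1 / \<mu>) \<cdot>\<^sub>m 1\<^sub>m m"
    using minv_smult_one nonzero_if_invertible_smult_one[OF inv] by (simp add: Delta_mu_def)
  then show ?thesis
    unfolding Ups_mu_def using minv_inverse[OF G] G
    by (simp add: mat_dims_simps mult_cancel_inverse[OF minv_inverse(3)[OF G]])
qed

section \<open>Block conjugate gradients in the block Lanczos basis\<close>

text \<open>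
  \<open>conj_dir V Gam Om i\<close> is the block column \<open>Z\<^sub>i\<close> of \<open>\<V>\<^sub>k L\<^sup>-\<^sup>T\<close>, where \<open>T\<^sub>k = L D L\<^sup>T\<close>,
  \<open>D = diag(\<Delta>\<^sub>1, \<dots>, \<Delta>\<^sub>k)\<close> and \<open>L\<close> has subdiagonal blocks \<open>\<Pi>\<^sub>i\<close>.
\<close>

fun conj_dir :: "(nat \<Rightarrow> real mat) \<Rightarrow> (nat \<Rightarrow> real mat) \<Rightarrow> (nat \<Rightarrow> real mat) \<Rightarrow> nat \<Rightarrow> real mat" where
  "conj_dir V Gam Om 0 = V 0"
| "conj_dir V Gam Om (Suc 0) = V 1"
| "conj_dir V Gam Om (Suc (Suc i)) = V (i + 2) - conj_dir V Gam Om (Suc i) * (Pi_blk Gam Om (i + 1))\<^sup>T"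

lemma conj_dir_Suc:
  "1 \<le> i \<Longrightarrow> conj_dir V Gam Om (i + 1) = V (i + 1) - conj_dir V Gam Om i * (Pi_blk Gam Om i)\<^sup>T"
  by (cases i) auto

definition alt_sign :: "nat \<Rightarrow> real" where
  "alt_sign j = (-1) ^ j"

lemma alt_sign_sq: "alt_sign j * alt_sign j = 1"
  unfolding alt_sign_def by (simp flip: power_mult_distrib)

lemma alt_sign_Suc: "alt_sign (j + 1) = - alt_sign j"
  unfolding alt_sign_def by simp

lemma alt_sign_nonzero: "alt_sign j \<noteq> 0"
  unfolding alt_sign_def by simp

locale bcg_lanczos =
  fixes n m k :: nat and A B X0 :: "real mat" and V Gam Om :: "nat \<Rightarrow> real mat"
  assumes A_pos: "sym_pos_def n A"
    and lanczos: "is_block_lanczos n m A (bcg_R A B X0 0) V Gam Om k"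
    and R_rank: "\<forall>j \<le> k. full_col_rank (bcg_R A B X0 j)"
begin

abbreviation "R \<equiv> bcg_R A B X0"
abbreviation "P \<equiv> bcg_P A B X0"
abbreviation "Ups \<equiv> bcg_Ups A B X0"
abbreviation "Xi \<equiv> bcg_Xi A B X0"
abbreviation "Z \<equiv> conj_dir V Gam Om"
abbreviation "\<Delta> \<equiv> Delta Gam Om"
abbreviation "\<Phi> \<equiv> Phi Gam Om"

lemma A_carrier: "A \<in> carrier_mat n n" and A_sym: "A\<^sup>T = A"
  using A_pos unfolding sym_pos_def_def by auto

lemma P_0: "P 0 = R 0"
  by (simp add: bcg_R_def bcg_P_def)

lemma bcg_Suc: "R (Suc j) = R j - A * P j * Ups j" "P (Suc j) = R (Suc j) + P j * Xi (Suc j)"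
  by (cases "bcg A B X0 j"; simp add: bcg_R_def bcg_P_def bcg_Ups_def bcg_Xi_def Let_def)+

lemma V_0: "V 0 = 0\<^sub>m n m" and V_1_carrier: "V 1 \<in> carrier_mat n m"
  and Gam_0_carrier: "Gam 0 \<in> carrier_mat m m"
  and V_1_orthonormal: "(V 1)\<^sup>T * V 1 = 1\<^sub>m m" and V_1_Gam_0: "V 1 * Gam 0 = R 0"
  using lanczos unfolding is_block_lanczos_def by blast+

lemma lanczos_step:
  assumes "1 \<le> j" "j \<le> k"
  shows "Om j = (V j)\<^sup>T * (A * V j - V (j - 1) * (Gam (j - 1))\<^sup>T)"
    "V (j + 1) \<in> carrier_mat n m" "Gam j \<in> carrier_mat m m"
    "(V (j + 1))\<^sup>T * V (j + 1) = 1\<^sub>m m"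
    "V (j + 1) * Gam j = (A * V j - V (j - 1) * (Gam (j - 1))\<^sup>T) - V j * Om j"
  using lanczos assms unfolding is_block_lanczos_def Let_def by blast+

lemma V_carrier: "j \<le> k + 1 \<Longrightarrow> V j \<in> carrier_mat n m"
  using V_0 V_1_carrier lanczos_step(2)[of "j - 1"]
  by (cases "j \<le> 1") (auto simp: le_Suc_eq)

lemma Gam_carrier: "j \<le> k \<Longrightarrow> Gam j \<in> carrier_mat m m"
  using Gam_0_carrier lanczos_step(3)[of j] by (cases "j = 0") auto

lemma Om_carrier:
  assumes "1 \<le> j" "j \<le> k"
  shows "Om j \<in> carrier_mat m m"
proof -
  have V: "V j \<in> carrier_mat n m" "V (j - 1) \<in> carrier_mat n m" and G: "Gam (j - 1) \<in> carrier_mat m m"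
    using V_carrier Gam_carrier assms by auto
  then have "A * V j - V (j - 1) * (Gam (j - 1))\<^sup>T \<in> carrier_mat n m" using A_carrier by auto
  then show ?thesis unfolding lanczos_step(1)[OF assms] using V by auto
qed

lemma A_mult_V:
  assumes "1 \<le> j" "j \<le> k"
  shows "A * V j = V (j + 1) * Gam j + V j * Om j + V (j - 1) * (Gam (j - 1))\<^sup>T"
proof -
  have V: "V (j + 1) \<in> carrier_mat n m" "V j \<in> carrier_mat n m" "V (j - 1) \<in> carrier_mat n m"
    and G: "Gam j \<in> carrier_mat m m" "Gam (j - 1) \<in> carrier_mat m m"
    using V_carrier Gam_carrier assms by auto
  show ?thesis
    using eq_add_if_diff_eq[where a = n and b = m, OF _ _ _ _ lanczos_step(5)[OF assms]]
      V G Om_carrier[OF assms] A_carrier by auto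
qed

definition orthonormal_upto :: "nat \<Rightarrow> bool" where
  "orthonormal_upto p \<longleftrightarrow> (\<forall>i l. 1 \<le> i \<longrightarrow> i \<le> p \<longrightarrow> 1 \<le> l \<longrightarrow> l \<le> p \<longrightarrow>
      (V i)\<^sup>T * V l = (if i = l then 1\<^sub>m m else 0\<^sub>m m m))"

definition Delta_regular_upto :: "nat \<Rightarrow> bool" where
  "Delta_regular_upto p \<longleftrightarrow>
     (\<forall>i. 1 \<le> i \<longrightarrow> i \<le> p \<longrightarrow> \<Delta> i \<in> carrier_mat m m \<and> (\<Delta> i)\<^sup>T = \<Delta> i \<and> invertible_mat (\<Delta> i))"

lemma Delta_regular_upto_mono: "Delta_regular_upto p \<Longrightarrow> q \<le> p \<Longrightarrow> Delta_regular_upto q"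
  unfolding Delta_regular_upto_def by auto

lemma Delta_regular_uptoD:
  assumes "Delta_regular_upto p" "1 \<le> i" "i \<le> p"
  shows "\<Delta> i \<in> carrier_mat m m" "(\<Delta> i)\<^sup>T = \<Delta> i" "invertible_mat (\<Delta> i)"
    "minv (\<Delta> i) \<in> carrier_mat m m" "\<Delta> i * minv (\<Delta> i) = 1\<^sub>m m" "minv (\<Delta> i) * \<Delta> i = 1\<^sub>m m"
    "(minv (\<Delta> i))\<^sup>T = minv (\<Delta> i)"
proof -
  show D: "\<Delta> i \<in> carrier_mat m m" "(\<Delta> i)\<^sup>T = \<Delta> i" "invertible_mat (\<Delta> i)"
    using assms unfolding Delta_regular_upto_def by auto
  show "minv (\<Delta> i) \<in> carrier_mat m m" "\<Delta> i * minv (\<Delta> i) = 1\<^sub>m m" "minv (\<Delta> i) * \<Delta> i = 1\<^sub>m m"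
    using minv_inverse[OF D(1,3)] by auto
  show "(minv (\<Delta> i))\<^sup>T = minv (\<Delta> i)" by (rule minv_sym[OF D(1,3,2)])
qed

lemma Delta_carrier:
  assumes "1 \<le> i" "i \<le> k" "Delta_regular_upto (i - 1)"
  shows "\<Delta> i \<in> carrier_mat m m"
proof (cases "i = 1")
  case True
  then show ?thesis using Om_carrier assms by simp
next
  case False
  then have i: "1 \<le> i - 1" "i - 1 + 1 = i" using assms by auto
  then have "\<Delta> i = Om i - Gam (i - 1) * minv (\<Delta> (i - 1)) * (Gam (i - 1))\<^sup>T"
    using Delta_Suc[OF i(1), of Gam Om] by simp
  moreover have "Gam (i - 1) \<in> carrier_mat m m" using assms(2) by (intro Gam_carrier) simp
  ultimately show ?thesis
    using Delta_regular_uptoD(4)[OF assms(3) i(1) order.refl] Om_carrier[OF assms(1,2)] by auto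
qed

lemma Pi_blk_carrier:
  assumes "Delta_regular_upto p" "1 \<le> i" "i \<le> p" "i \<le> k"
  shows "Pi_blk Gam Om i \<in> carrier_mat m m" "(Pi_blk Gam Om i)\<^sup>T = minv (\<Delta> i) * (Gam i)\<^sup>T"
  using Delta_regular_uptoD[OF assms(1-3)] Gam_carrier[OF assms(4)]
  unfolding Pi_blk_def by (auto simp: mat_dims_simps)

lemma conj_dir_carrier: "1 \<le> i \<Longrightarrow> i \<le> k + 1 \<Longrightarrow> Delta_regular_upto (i - 1) \<Longrightarrow> Z i \<in> carrier_mat n m"
proof (induction i)
  case (Suc i)
  show ?case
  proof (cases "i = 0")
    case True
    then show ?thesis using V_1_carrier by simp
  next
    case False
    then have i: "1 \<le> i" "i \<le> k" using Suc.prems by auto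
    have "Z i \<in> carrier_mat n m" using Suc i Delta_regular_upto_mono by auto
    moreover have "Pi_blk Gam Om i \<in> carrier_mat m m" using Pi_blk_carrier[OF Suc.prems(3)] i by auto
    ultimately show ?thesis using conj_dir_Suc[OF i(1), of V Gam Om] V_carrier[of "i + 1"] i by auto
  qed
qed simp

lemma conj_dir_orthogonal:
  "1 \<le> i \<Longrightarrow> i \<le> k + 1 \<Longrightarrow> Delta_regular_upto (i - 1) \<Longrightarrow> X \<in> carrier_mat n c \<Longrightarrow>
   (\<forall>l. 1 \<le> l \<longrightarrow> l \<le> i \<longrightarrow> (V l)\<^sup>T * X = 0\<^sub>m m c) \<Longrightarrow> (Z i)\<^sup>T * X = 0\<^sub>m m c"
proof (induction i)
  case (Suc i)
  show ?case
  proof (cases "i = 0")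
    case True
    then show ?thesis using Suc.prems by simp
  next
    case False
    then have i: "1 \<le> i" "i \<le> k" using Suc.prems by auto
    have Zi: "Z i \<in> carrier_mat n m" using conj_dir_carrier i Suc.prems Delta_regular_upto_mono by auto
    have IH: "(Z i)\<^sup>T * X = 0\<^sub>m m c" using Suc i Delta_regular_upto_mono by auto
    have Pi: "Pi_blk Gam Om i \<in> carrier_mat m m" using Pi_blk_carrier[OF Suc.prems(3)] i by auto
    have "(Z (Suc i))\<^sup>T * X = (V (i + 1))\<^sup>T * X - Pi_blk Gam Om i * ((Z i)\<^sup>T * X)"
      using conj_dir_Suc[OF i(1), of V Gam Om] Zi Pi V_carrier[of "i + 1"] i Suc.prems(4)
      by (simp add: mat_dims_simps)
    also have "\<dots> = 0\<^sub>m m c" using IH Suc.prems(5) Pi i by (auto intro!: eq_matI)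
    finally show ?thesis .
  qed
qed simp

lemma conj_dir_V:
  assumes "1 \<le> i" "i \<le> k + 1" "Delta_regular_upto (i - 1)" "orthonormal_upto i"
  shows "(Z i)\<^sup>T * V i = 1\<^sub>m m"
proof (cases "i = 1")
  case True
  then show ?thesis using V_1_orthonormal by simp
next
  case False
  then have i: "1 \<le> i - 1" "i - 1 \<le> k" "i - 1 + 1 = i" using assms by auto
  have Zi: "Z (i - 1) \<in> carrier_mat n m" using conj_dir_carrier i assms Delta_regular_upto_mono by auto
  have Pi: "Pi_blk Gam Om (i - 1) \<in> carrier_mat m m" using Pi_blk_carrier[OF assms(3)] i by auto
  have Vi: "V i \<in> carrier_mat n m" using V_carrier assms by auto
  have "(Z (i - 1))\<^sup>T * V i = 0\<^sub>m m m"
    using assms(4) i Vi Delta_regular_upto_mono[OF assms(3)]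
    by (intro conj_dir_orthogonal) (auto simp: orthonormal_upto_def)
  moreover have "(Z i)\<^sup>T * V i = (V i)\<^sup>T * V i - Pi_blk Gam Om (i - 1) * ((Z (i - 1))\<^sup>T * V i)"
    using conj_dir_Suc[OF i(1), of V Gam Om] Zi Pi Vi i(3) by (simp add: mat_dims_simps)
  ultimately show ?thesis
    using Pi assms(4) assms(1) unfolding orthonormal_upto_def by (auto intro!: eq_matI)
qed

lemma A_mult_conj_dir:
  "1 \<le> i \<Longrightarrow> i \<le> k \<Longrightarrow> Delta_regular_upto (i - 1) \<Longrightarrow> A * Z i = V i * \<Delta> i + V (i + 1) * Gam i"
proof (induction i)
  case (Suc i)
  show ?case
  proof (cases "i = 0")
    case True
    have V: "V 1 \<in> carrier_mat n m" "V 2 \<in> carrier_mat n m" and G: "Gam 1 \<in> carrier_mat m m"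
      and Om1: "Om 1 \<in> carrier_mat m m"
      using V_carrier Gam_carrier Om_carrier Suc.prems True by auto
    have "A * Z (Suc i) = V 2 * Gam 1 + V 1 * Om 1 + V 0 * (Gam 0)\<^sup>T"
      using A_mult_V[of 1] Suc.prems True by (simp add: numeral_2_eq_2)
    also have "\<dots> = V 1 * Om 1 + V 2 * Gam 1" using V G Om1 V_0 Gam_0_carrier by (auto intro!: eq_matI)
    finally show ?thesis using True by (simp add: numeral_2_eq_2)
  next
    case False
    then have i: "1 \<le> i" "i \<le> k" "i + 1 \<le> k" using Suc.prems by auto
    have regular: "Delta_regular_upto (i - 1)" using Suc.prems Delta_regular_upto_mono by auto
    note D = Delta_regular_uptoD[OF Suc.prems(3) i(1)]
    have Zi: "Z i \<in> carrier_mat n m" using conj_dir_carrier i regular by auto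
    have V: "V i \<in> carrier_mat n m" "V (i + 1) \<in> carrier_mat n m" "V (i + 2) \<in> carrier_mat n m"
      and G: "Gam i \<in> carrier_mat m m" "Gam (i + 1) \<in> carrier_mat m m"
      and Om': "Om (i + 1) \<in> carrier_mat m m"
      using V_carrier Gam_carrier Om_carrier i by auto
    define X1 where "X1 = V (i + 2) * Gam (i + 1)"
    define X2 where "X2 = V (i + 1) * Om (i + 1)"
    define X3 where "X3 = V i * (Gam i)\<^sup>T"
    define X4 where "X4 = V (i + 1) * (Gam i * (minv (\<Delta> i) * (Gam i)\<^sup>T))"
    have X: "X1 \<in> carrier_mat n m" "X2 \<in> carrier_mat n m" "X3 \<in> carrier_mat n m" "X4 \<in> carrier_mat n m"
      unfolding X1_def X2_def X3_def X4_def using V G Om' D by auto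
    have "A * Z (Suc i) = A * V (i + 1) - (A * Z i) * (minv (\<Delta> i) * (Gam i)\<^sup>T)"
      using conj_dir_Suc[OF i(1), of V Gam Om] Pi_blk_carrier(2)[OF Suc.prems(3)] i Zi V G D A_carrier
      by (simp add: mat_dims_simps)
    also have "A * V (i + 1) = X1 + X2 + X3"
      unfolding X1_def X2_def X3_def using A_mult_V[of "i + 1"] i by simp
    also have "(A * Z i) * (minv (\<Delta> i) * (Gam i)\<^sup>T) = X3 + X4"
      unfolding Suc.IH[OF i(1,2) regular] X3_def X4_def using V G D
      by (simp add: mat_dims_simps mult_cancel_inverse[OF D(5)])
    also have "(X1 + X2 + X3) - (X3 + X4) = (X2 - X4) + X1" by (rule add3_minus_add_mat[OF X])
    also have "\<dots> = V (i + 1) * \<Delta> (i + 1) + V (i + 2) * Gam (i + 1)"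
      unfolding X1_def X2_def X4_def Delta_Suc[OF i(1), of Gam Om] using V G Om' D
      by (simp add: mat_dims_simps)
    finally show ?thesis by simp
  qed
qed simp

lemma V_A_V_below:
  assumes p: "p \<le> k" and orth: "orthonormal_upto p" and l: "1 \<le> l" "l < p"
  shows "(V l)\<^sup>T * (A * V p) = (if l + 1 = p then (Gam l)\<^sup>T else 0\<^sub>m m m)"
proof -
  have o1: "(V l)\<^sup>T * V p = 0\<^sub>m m m" using orth p l unfolding orthonormal_upto_def by auto
  have o2: "(V (l - 1))\<^sup>T * V p = 0\<^sub>m m m"
    using orth p l V_0 V_carrier[of p] unfolding orthonormal_upto_def by (cases "l = 1") (auto intro!: eq_matI)
  have o3: "(V (l + 1))\<^sup>T * V p = (if l + 1 = p then 1\<^sub>m m else 0\<^sub>m m m)"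
    using orth p l unfolding orthonormal_upto_def by auto
  have V: "V l \<in> carrier_mat n m" "V p \<in> carrier_mat n m" "V (l + 1) \<in> carrier_mat n m"
    "V (l - 1) \<in> carrier_mat n m"
    and G: "Gam l \<in> carrier_mat m m" "Gam (l - 1) \<in> carrier_mat m m" and Om': "Om l \<in> carrier_mat m m"
    using V_carrier Gam_carrier Om_carrier p l by auto
  have "(V l)\<^sup>T * (A * V p) = (A * V l)\<^sup>T * V p"
    using V A_carrier A_sym by (simp add: mat_dims_simps)
  also have "\<dots> = (Gam l)\<^sup>T * ((V (l + 1))\<^sup>T * V p) + (Om l)\<^sup>T * ((V l)\<^sup>T * V p)
      + Gam (l - 1) * ((V (l - 1))\<^sup>T * V p)"
    unfolding A_mult_V[OF l(1) order.trans[OF less_imp_le[OF l(2)] p]]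
    using V G Om' by (simp add: mat_dims_simps)
  also have "\<dots> = (if l + 1 = p then (Gam l)\<^sup>T else 0\<^sub>m m m)"
    unfolding o1 o2 o3 using G Om' by (auto intro!: eq_matI)
  finally show ?thesis .
qed

lemma V_orthogonal_next:
  assumes p: "1 \<le> p" "p \<le> k" and orth: "orthonormal_upto p" and l: "1 \<le> l" "l \<le> p"
  shows "(V l)\<^sup>T * (V (p + 1) * Gam p) = 0\<^sub>m m m"
proof -
  have V: "V l \<in> carrier_mat n m" "V p \<in> carrier_mat n m" "V (p - 1) \<in> carrier_mat n m"
    and G: "Gam (p - 1) \<in> carrier_mat m m" and Om': "Om p \<in> carrier_mat m m"
    using V_carrier Gam_carrier Om_carrier p l by auto
  define W where "W = A * V p - V (p - 1) * (Gam (p - 1))\<^sup>T"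
  have W: "W \<in> carrier_mat n m" unfolding W_def using V G A_carrier by auto
  have split: "(V l)\<^sup>T * (V (p + 1) * Gam p) = (V l)\<^sup>T * W - ((V l)\<^sup>T * V p) * Om p"
    unfolding lanczos_step(5)[OF p] W_def[symmetric] using V W Om' by (simp add: mat_dims_simps)
  show ?thesis
  proof (cases "l = p")
    case True
    have "(V l)\<^sup>T * W = Om p" unfolding W_def True lanczos_step(1)[OF p] ..
    moreover have "(V l)\<^sup>T * V p = 1\<^sub>m m" using orth p True unfolding orthonormal_upto_def by auto
    ultimately show ?thesis unfolding split using Om' by (auto intro!: eq_matI)
  next
    case False
    then have lp: "l < p" using l by auto
    have "(V l)\<^sup>T * V p = 0\<^sub>m m m" using orth p l lp unfolding orthonormal_upto_def by auto
    moreover have "(V l)\<^sup>T * V (p - 1) = (if l = p - 1 then 1\<^sub>m m else 0\<^sub>m m m)"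
      using orth p l lp unfolding orthonormal_upto_def by auto
    moreover have "(V l)\<^sup>T * W = (V l)\<^sup>T * (A * V p) - ((V l)\<^sup>T * V (p - 1)) * (Gam (p - 1))\<^sup>T"
      unfolding W_def using V G A_carrier by (simp add: mat_dims_simps)
    ultimately show ?thesis
      unfolding split V_A_V_below[OF p(2) orth l(1) lp] using Gam_carrier[of l] G Om' lp p
      by (auto intro!: eq_matI)
  qed
qed

lemma orthonormal_upto_Suc:
  assumes p: "1 \<le> p" "p \<le> k" and orth: "orthonormal_upto p" and G: "invertible_mat (Gam p)"
  shows "orthonormal_upto (p + 1)"
proof -
  have V: "V (p + 1) \<in> carrier_mat n m" and Gp: "Gam p \<in> carrier_mat m m"
    using V_carrier Gam_carrier p by auto
  note Gi = minv_inverse[OF Gp G]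
  have new: "(V l)\<^sup>T * V (p + 1) = 0\<^sub>m m m" if l: "1 \<le> l" "l \<le> p" for l
  proof -
    have "V l \<in> carrier_mat n m" using V_carrier l p by auto
    then have "(V l)\<^sup>T * V (p + 1) = ((V l)\<^sup>T * (V (p + 1) * Gam p)) * minv (Gam p)"
      using V Gp Gi by (simp add: mat_dims_simps)
    then show ?thesis unfolding V_orthogonal_next[OF p orth l] using Gi by simp
  qed
  have new': "(V (p + 1))\<^sup>T * V l = 0\<^sub>m m m" if l: "1 \<le> l" "l \<le> p" for l
  proof -
    have "V l \<in> carrier_mat n m" using V_carrier l p by auto
    then have "(V (p + 1))\<^sup>T * V l = ((V l)\<^sup>T * V (p + 1))\<^sup>T" using V by (simp add: mat_dims_simps)
    then show ?thesis unfolding new[OF l] by (auto intro!: eq_matI)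
  qed
  show ?thesis unfolding orthonormal_upto_def
  proof (intro allI impI)
    fix i l assume il: "1 \<le> i" "i \<le> p + 1" "1 \<le> l" "l \<le> p + 1"
    consider "i \<le> p" "l \<le> p" | "i = p + 1" "l \<le> p" | "i \<le> p" "l = p + 1" | "i = p + 1" "l = p + 1"
      using il by linarith
    then show "(V i)\<^sup>T * V l = (if i = l then 1\<^sub>m m else 0\<^sub>m m m)"
      using orth il new new' lanczos_step(4)[OF p] unfolding orthonormal_upto_def by cases auto
  qed
qed

lemma conj_dir_gram:
  assumes p: "1 \<le> p" "p \<le> k" and orth: "orthonormal_upto p" and regular: "Delta_regular_upto (p - 1)"
  shows "(Z p)\<^sup>T * (A * Z p) = \<Delta> p"
proof -
  have Z: "Z p \<in> carrier_mat n m" using conj_dir_carrier p regular by auto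
  have V: "V p \<in> carrier_mat n m" "V (p + 1) \<in> carrier_mat n m" and G: "Gam p \<in> carrier_mat m m"
    using V_carrier Gam_carrier p by auto
  have D: "\<Delta> p \<in> carrier_mat m m" using Delta_carrier p regular by auto
  have "(Z p)\<^sup>T * (V (p + 1) * Gam p) = 0\<^sub>m m m"
    using p regular V G V_orthogonal_next[OF p orth] by (intro conj_dir_orthogonal) auto
  then have "(Z p)\<^sup>T * (A * Z p) = ((Z p)\<^sup>T * V p) * \<Delta> p + 0\<^sub>m m m"
    unfolding A_mult_conj_dir[OF p regular] using Z V G D by (simp add: mat_dims_simps)
  moreover have "(Z p)\<^sup>T * V p = 1\<^sub>m m" using conj_dir_V[OF _ _ regular orth] p by simp
  ultimately show ?thesis using D by simp
qed

lemma Delta_regular_upto_Suc: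
  assumes p: "1 \<le> p" "p \<le> k" and orth: "orthonormal_upto p" and regular: "Delta_regular_upto (p - 1)"
  shows "Delta_regular_upto p"
proof -
  have Z: "Z p \<in> carrier_mat n m" using conj_dir_carrier p regular by auto
  have "(Z p)\<^sup>T * (A * Z p) \<in> carrier_mat m m" using Z A_carrier by auto
  moreover have "((Z p)\<^sup>T * (A * Z p))\<^sup>T = (Z p)\<^sup>T * (A * Z p)"
    using Z A_carrier A_sym by (simp add: mat_dims_simps)
  moreover have "(V p)\<^sup>T * Z p = 1\<^sub>m m"
    using conj_dir_V[OF _ _ regular orth] p Z V_carrier[of p] transpose_mult_dims[of "(Z p)\<^sup>T" "V p"]
    by (simp add: mat_dims_simps)
  then have "invertible_mat ((Z p)\<^sup>T * (A * Z p))"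
    using V_carrier[of p] p by (intro invertible_congruence_if_sym_pos[OF A_pos Z]) auto
  ultimately have "\<Delta> p \<in> carrier_mat m m \<and> (\<Delta> p)\<^sup>T = \<Delta> p \<and> invertible_mat (\<Delta> p)"
    unfolding conj_dir_gram[OF p orth regular] by simp
  moreover have "i \<le> p - 1" if "i \<le> p" "i \<noteq> p" for i using that by simp
  ultimately show ?thesis using regular unfolding Delta_regular_upto_def by blast
qed

lemma V_orthonormal: "j \<le> k \<Longrightarrow> (V (j + 1))\<^sup>T * V (j + 1) = 1\<^sub>m m"
  using V_1_orthonormal lanczos_step(4)[of j] by (cases "j = 0") auto

lemma gram_R:
  assumes j: "j \<le> k" and Phi: "\<Phi> j \<in> carrier_mat m m"
    and R: "R j = alt_sign j \<cdot>\<^sub>m (V (j + 1) * \<Phi> j)"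
  shows "(R j)\<^sup>T * R j = (\<Phi> j)\<^sup>T * \<Phi> j"
  unfolding R using V_carrier[of "j + 1"] j Phi V_orthonormal[OF j] alt_sign_sq
  by (intro gram_smult_orthonormal_mult) auto

lemma Phi_Suc: "\<Phi> (j + 1) = Gam (j + 1) * minv (\<Delta> (j + 1)) * \<Phi> j"
  by (simp add: Pi_blk_def)

lemma bcg_Ups_eq:
  assumes j: "j + 1 \<le> k" and orth: "orthonormal_upto (j + 1)"
    and regular: "Delta_regular_upto (j + 1)"
    and Phi: "\<Phi> j \<in> carrier_mat m m" "invertible_mat (\<Phi> j)"
    and R: "R j = alt_sign j \<cdot>\<^sub>m (V (j + 1) * \<Phi> j)" and P: "P j = alt_sign j \<cdot>\<^sub>m (Z (j + 1) * \<Phi> j)"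
  shows "Ups j = minv (\<Phi> j) * minv (\<Delta> (j + 1)) * \<Phi> j"
proof -
  have regular': "Delta_regular_upto j" using Delta_regular_upto_mono[OF regular] by simp
  note D = Delta_regular_uptoD[OF regular le_add2 order.refl]
  note Phi_inv = minv_inverse[OF Phi]
  have Z: "Z (j + 1) \<in> carrier_mat n m" using conj_dir_carrier j regular' by auto
  have gram: "(Z (j + 1))\<^sup>T * (A * Z (j + 1)) = \<Delta> (j + 1)"
    using conj_dir_gram[of "j + 1"] j orth regular' by simp
  have PAP: "(P j)\<^sup>T * A * P j = (\<Phi> j)\<^sup>T * (\<Delta> (j + 1) * \<Phi> j)"
  proof -
    have "(P j)\<^sup>T * A * P j = (alt_sign j * alt_sign j) \<cdot>\<^sub>m ((\<Phi> j)\<^sup>T * ((Z (j + 1))\<^sup>T * (A * Z (j + 1))) * \<Phi> j)"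
      unfolding P using Z Phi A_carrier by (simp add: mat_dims_simps smult_smult_mat)
    also have "\<dots> = (\<Phi> j)\<^sup>T * (\<Delta> (j + 1) * \<Phi> j)"
      unfolding alt_sign_sq gram using Phi D by (simp add: mat_dims_simps smult_one_mat)
    finally show ?thesis .
  qed
  have PhiT_inv: "(minv (\<Phi> j))\<^sup>T * (\<Phi> j)\<^sup>T = 1\<^sub>m m"
    using Phi Phi_inv by (simp flip: transpose_mult_dims)
  have "minv ((\<Phi> j)\<^sup>T * (\<Delta> (j + 1) * \<Phi> j)) = minv (\<Phi> j) * minv (\<Delta> (j + 1)) * (minv (\<Phi> j))\<^sup>T"
    using minv_mult[of "(\<Phi> j)\<^sup>T" m "\<Delta> (j + 1) * \<Phi> j"] minv_mult[of "\<Delta> (j + 1)" m "\<Phi> j"]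
      minv_transpose[OF Phi] invertible_mat_mult_iff[of "\<Delta> (j + 1)" m "\<Phi> j"] Phi D
    by (simp add: mat_dims_simps)
  then show ?thesis
    unfolding bcg_Ups_def PAP gram_R[OF le_trans[OF le_add1 j] Phi(1) R] using j Phi Phi_inv D
    by (simp add: mat_dims_simps mult_cancel_inverse[OF PhiT_inv])
qed

lemma bcg_R_Suc_eq:
  assumes j: "j + 1 \<le> k" and orth: "orthonormal_upto (j + 1)"
    and regular: "Delta_regular_upto (j + 1)"
    and Phi: "\<Phi> j \<in> carrier_mat m m" "invertible_mat (\<Phi> j)"
    and R: "R j = alt_sign j \<cdot>\<^sub>m (V (j + 1) * \<Phi> j)" and P: "P j = alt_sign j \<cdot>\<^sub>m (Z (j + 1) * \<Phi> j)"
  shows "R (j + 1) = alt_sign (j + 1) \<cdot>\<^sub>m (V (j + 2) * \<Phi> (j + 1))"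
proof -
  have regular': "Delta_regular_upto j" using Delta_regular_upto_mono[OF regular] by simp
  note D = Delta_regular_uptoD[OF regular le_add2 order.refl]
  note Phi_inv = minv_inverse[OF Phi]
  have Z: "Z (j + 1) \<in> carrier_mat n m" using conj_dir_carrier j regular' by auto
  have V: "V (j + 1) \<in> carrier_mat n m" "V (j + 2) \<in> carrier_mat n m" and G: "Gam (j + 1) \<in> carrier_mat m m"
    using V_carrier Gam_carrier j by auto
  define Y where "Y = V (j + 2) * (Gam (j + 1) * (minv (\<Delta> (j + 1)) * \<Phi> j))"
  have Y: "Y \<in> carrier_mat n m" "V (j + 1) * \<Phi> j \<in> carrier_mat n m" unfolding Y_def using V G D Phi by auto
  have "A * P j * Ups j = alt_sign j \<cdot>\<^sub>m (A * (Z (j + 1) * (minv (\<Delta> (j + 1)) * \<Phi> j)))"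
    unfolding P bcg_Ups_eq[OF assms] using A_carrier Z D Phi Phi_inv
    by (simp add: mat_dims_simps mult_cancel_inverse[OF Phi_inv(2)])
  also have "A * (Z (j + 1) * (minv (\<Delta> (j + 1)) * \<Phi> j))
      = V (j + 1) * (\<Delta> (j + 1) * (minv (\<Delta> (j + 1)) * \<Phi> j)) + Y"
  proof -
    have "A * Z (j + 1) = V (j + 1) * \<Delta> (j + 1) + V (j + 2) * Gam (j + 1)"
      using A_mult_conj_dir[of "j + 1"] j regular' by (simp add: numeral_2_eq_2)
    moreover have "A * (Z (j + 1) * (minv (\<Delta> (j + 1)) * \<Phi> j))
        = (A * Z (j + 1)) * (minv (\<Delta> (j + 1)) * \<Phi> j)"
      using assoc_mult_mat[OF A_carrier Z mult_carrier_mat[OF D(4) Phi(1)]] by simp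
    ultimately show ?thesis unfolding Y_def using Z V G D Phi by (simp add: mat_dims_simps)
  qed
  also have "\<Delta> (j + 1) * (minv (\<Delta> (j + 1)) * \<Phi> j) = \<Phi> j"
    by (rule mult_cancel_inverse[OF D(5)]) (use D Phi in auto)
  finally have "R (j + 1) = alt_sign j \<cdot>\<^sub>m (V (j + 1) * \<Phi> j) - alt_sign j \<cdot>\<^sub>m (V (j + 1) * \<Phi> j + Y)"
    using bcg_Suc(1)[of j] R by simp
  also have "\<dots> = alt_sign (j + 1) \<cdot>\<^sub>m Y"
    unfolding alt_sign_Suc by (rule smult_diff_smult_add_mat[OF Y(2,1)])
  finally show ?thesis
    unfolding Y_def Phi_Suc using V G D Phi by (simp add: mat_dims_simps)
qed

lemma bcg_P_mult_Xi:
  assumes j: "j + 1 \<le> k" and orth: "orthonormal_upto (j + 1)"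
    and regular: "Delta_regular_upto (j + 1)"
    and Phi: "\<Phi> j \<in> carrier_mat m m" "invertible_mat (\<Phi> j)"
    and R: "R j = alt_sign j \<cdot>\<^sub>m (V (j + 1) * \<Phi> j)" and P: "P j = alt_sign j \<cdot>\<^sub>m (Z (j + 1) * \<Phi> j)"
  shows "P j * Xi (j + 1) = alt_sign j \<cdot>\<^sub>m (Z (j + 1) * ((Pi_blk Gam Om (j + 1))\<^sup>T * \<Phi> (j + 1)))"
proof -
  have regular': "Delta_regular_upto j" using Delta_regular_upto_mono[OF regular] by simp
  note D = Delta_regular_uptoD[OF regular le_add2 order.refl]
  note Phi_inv = minv_inverse[OF Phi]
  note Pi = Pi_blk_carrier[OF regular le_add2 order.refl j]
  have Z: "Z (j + 1) \<in> carrier_mat n m" using conj_dir_carrier j regular' by auto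
  have V: "V (j + 2) \<in> carrier_mat n m" and G: "Gam (j + 1) \<in> carrier_mat m m"
    using V_carrier Gam_carrier j by auto
  have Phi': "\<Phi> (j + 1) \<in> carrier_mat m m" unfolding Phi_Suc using G D Phi by auto
  have R': "R (j + 1) = alt_sign (j + 1) \<cdot>\<^sub>m (V (j + 2) * \<Phi> (j + 1))"
    by (rule bcg_R_Suc_eq[OF assms])
  then have gram': "(R (j + 1))\<^sup>T * R (j + 1) = (\<Phi> (j + 1))\<^sup>T * \<Phi> (j + 1)"
    using gram_R[OF j Phi'] by (simp add: numeral_2_eq_2)
  have PhiT_inv: "(minv (\<Phi> j))\<^sup>T * (\<Phi> j)\<^sup>T = 1\<^sub>m m"
    using Phi Phi_inv by (simp flip: transpose_mult_dims)
  have "minv ((\<Phi> j)\<^sup>T * \<Phi> j) = minv (\<Phi> j) * (minv (\<Phi> j))\<^sup>T"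
    using minv_mult[of "(\<Phi> j)\<^sup>T" m "\<Phi> j"] minv_transpose[OF Phi] Phi by simp
  then have "Xi (j + 1) = minv (\<Phi> j) * ((minv (\<Phi> j))\<^sup>T * ((\<Phi> (j + 1))\<^sup>T * \<Phi> (j + 1)))"
    unfolding bcg_Xi_def gram' using gram_R[OF le_trans[OF le_add1 j] Phi(1) R] Phi Phi_inv Phi'
    by (simp add: mat_dims_simps del: Phi.simps)
  then have "P j * Xi (j + 1) = alt_sign j \<cdot>\<^sub>m (Z (j + 1) * ((minv (\<Phi> j))\<^sup>T * ((\<Phi> (j + 1))\<^sup>T * \<Phi> (j + 1))))"
    unfolding P using Z Phi Phi_inv Phi'
    by (simp add: mat_dims_simps mult_cancel_inverse[OF Phi_inv(2)] del: Phi.simps)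
  also have "(minv (\<Phi> j))\<^sup>T * ((\<Phi> (j + 1))\<^sup>T * \<Phi> (j + 1)) = (Pi_blk Gam Om (j + 1))\<^sup>T * \<Phi> (j + 1)"
  proof -
    have "(\<Phi> (j + 1))\<^sup>T = (\<Phi> j)\<^sup>T * (Pi_blk Gam Om (j + 1))\<^sup>T"
      using Pi(1) Phi by (simp add: mat_dims_simps)
    then show ?thesis using Phi Phi_inv Pi(1) Phi'
      by (simp add: mat_dims_simps mult_cancel_inverse[OF PhiT_inv] del: Phi.simps)
  qed
  finally show ?thesis .
qed

lemma bcg_P_Suc_eq:
  assumes j: "j + 1 \<le> k" and orth: "orthonormal_upto (j + 1)"
    and regular: "Delta_regular_upto (j + 1)"
    and Phi: "\<Phi> j \<in> carrier_mat m m" "invertible_mat (\<Phi> j)"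
    and R: "R j = alt_sign j \<cdot>\<^sub>m (V (j + 1) * \<Phi> j)" and P: "P j = alt_sign j \<cdot>\<^sub>m (Z (j + 1) * \<Phi> j)"
  shows "P (j + 1) = alt_sign (j + 1) \<cdot>\<^sub>m (Z (j + 2) * \<Phi> (j + 1))"
proof -
  have regular': "Delta_regular_upto j" using Delta_regular_upto_mono[OF regular] by simp
  note D = Delta_regular_uptoD[OF regular le_add2 order.refl]
  note Phi_inv = minv_inverse[OF Phi]
  note Pi = Pi_blk_carrier[OF regular le_add2 order.refl j]
  have Z: "Z (j + 1) \<in> carrier_mat n m" using conj_dir_carrier j regular' by auto
  have V: "V (j + 2) \<in> carrier_mat n m" and G: "Gam (j + 1) \<in> carrier_mat m m"
    using V_carrier Gam_carrier j by auto
  have Phi': "\<Phi> (j + 1) \<in> carrier_mat m m" unfolding Phi_Suc using G D Phi by auto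
  have R': "R (j + 1) = alt_sign (j + 1) \<cdot>\<^sub>m (V (j + 2) * \<Phi> (j + 1))"
    by (rule bcg_R_Suc_eq[OF assms])
  then have "P (j + 1) = (- alt_sign j) \<cdot>\<^sub>m (V (j + 2) * \<Phi> (j + 1))
      + alt_sign j \<cdot>\<^sub>m (Z (j + 1) * ((Pi_blk Gam Om (j + 1))\<^sup>T * \<Phi> (j + 1)))"
    using bcg_Suc(2)[of j] bcg_P_mult_Xi[OF assms] unfolding alt_sign_Suc by simp
  also have "\<dots> = (- alt_sign j) \<cdot>\<^sub>m (V (j + 2) * \<Phi> (j + 1) - Z (j + 1) * ((Pi_blk Gam Om (j + 1))\<^sup>T * \<Phi> (j + 1)))"
    by (rule smult_add_neg_smult_mat[OF mult_carrier_mat[OF V Phi']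
          mult_carrier_mat[OF Z mult_carrier_mat[OF transpose_carrier_mat[THEN iffD2, OF Pi(1)] Phi']]])
  also have "V (j + 2) * \<Phi> (j + 1) - Z (j + 1) * ((Pi_blk Gam Om (j + 1))\<^sup>T * \<Phi> (j + 1)) = Z (j + 2) * \<Phi> (j + 1)"
    using conj_dir_Suc[of "j + 1" V Gam Om] V Z Pi(1) Phi'
    by (simp add: mat_dims_simps numeral_2_eq_2 del: Phi.simps)
  finally show ?thesis unfolding alt_sign_Suc .
qed

definition bcg_lanczos_rel :: "nat \<Rightarrow> bool" where
  "bcg_lanczos_rel j \<longleftrightarrow> orthonormal_upto (j + 1) \<and> Delta_regular_upto j \<and>
     (\<forall>i \<le> j. \<Phi> i \<in> carrier_mat m m \<and> invertible_mat (\<Phi> i) \<and> invertible_mat (Gam i)) \<and>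
     R j = alt_sign j \<cdot>\<^sub>m (V (j + 1) * \<Phi> j) \<and> P j = alt_sign j \<cdot>\<^sub>m (Z (j + 1) * \<Phi> j) \<and>
     (\<forall>i < j. Ups i = minv (\<Phi> i) * minv (\<Delta> (i + 1)) * \<Phi> i)"

lemma bcg_lanczos_rel_0: "bcg_lanczos_rel 0"
proof -
  have R0: "R 0 = alt_sign 0 \<cdot>\<^sub>m (V 1 * \<Phi> 0)"
    using V_1_Gam_0 by (simp add: alt_sign_def smult_one_mat)
  have "invertible_mat (\<Phi> 0)"
    using full_col_rank_mult_imp_invertible[OF V_1_carrier _ alt_sign_nonzero] R_rank R0 Gam_0_carrier by auto
  then show ?thesis
    using R0 P_0 V_1_orthonormal Gam_0_carrier
    unfolding bcg_lanczos_rel_def orthonormal_upto_def Delta_regular_upto_def by auto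
qed

lemma bcg_lanczos_rel_Suc:
  assumes rel: "bcg_lanczos_rel j" and j: "j + 1 \<le> k"
  shows "bcg_lanczos_rel (j + 1)"
proof -
  have orth: "orthonormal_upto (j + 1)" and regular': "Delta_regular_upto j"
    and Phis: "\<forall>i \<le> j. \<Phi> i \<in> carrier_mat m m \<and> invertible_mat (\<Phi> i) \<and> invertible_mat (Gam i)"
    and R: "R j = alt_sign j \<cdot>\<^sub>m (V (j + 1) * \<Phi> j)" and P: "P j = alt_sign j \<cdot>\<^sub>m (Z (j + 1) * \<Phi> j)"
    and Ups: "\<forall>i < j. Ups i = minv (\<Phi> i) * minv (\<Delta> (i + 1)) * \<Phi> i"
    using rel unfolding bcg_lanczos_rel_def by auto
  have Phi: "\<Phi> j \<in> carrier_mat m m" "invertible_mat (\<Phi> j)" using Phis by auto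
  have regular: "Delta_regular_upto (j + 1)"
    using Delta_regular_upto_Suc[of "j + 1"] j orth regular' by simp
  note D = Delta_regular_uptoD[OF regular le_add2 order.refl]
  have V: "V (j + 2) \<in> carrier_mat n m" and G: "Gam (j + 1) \<in> carrier_mat m m"
    using V_carrier Gam_carrier j by auto
  have Phi': "\<Phi> (j + 1) \<in> carrier_mat m m" unfolding Phi_Suc using G D Phi by auto
  note R' = bcg_R_Suc_eq[OF j orth regular Phi R P]
  have Phi'_inv: "invertible_mat (\<Phi> (j + 1))"
    using full_col_rank_mult_imp_invertible[OF V Phi' alt_sign_nonzero] R_rank j R' by auto
  have "invertible_mat (Gam (j + 1) * (minv (\<Delta> (j + 1)) * \<Phi> j))"
    using Phi'_inv G D Phi unfolding Phi_Suc by (simp add: mat_dims_simps)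
  then have G_inv: "invertible_mat (Gam (j + 1))"
    using invertible_mat_mult_iff[OF G, of "minv (\<Delta> (j + 1)) * \<Phi> j"] D Phi by auto
  have "orthonormal_upto (j + 2)"
    using orthonormal_upto_Suc[of "j + 1"] j orth G_inv by (simp add: numeral_2_eq_2)
  moreover have "\<forall>i \<le> j + 1. \<Phi> i \<in> carrier_mat m m \<and> invertible_mat (\<Phi> i) \<and> invertible_mat (Gam i)"
    using Phis Phi' Phi'_inv G_inv le_Suc_eq by auto
  moreover have "\<forall>i < j + 1. Ups i = minv (\<Phi> i) * minv (\<Delta> (i + 1)) * \<Phi> i"
    using Ups bcg_Ups_eq[OF j orth regular Phi R P] less_Suc_eq by auto
  ultimately show ?thesis
    unfolding bcg_lanczos_rel_def using regular R' bcg_P_Suc_eq[OF j orth regular Phi R P]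
    by (simp add: numeral_2_eq_2)
qed

lemma bcg_lanczos_rel_upto: "j \<le> k \<Longrightarrow> bcg_lanczos_rel j"
proof (induction j)
  case (Suc j)
  then show ?case using bcg_lanczos_rel_Suc[of j] by simp
qed (rule bcg_lanczos_rel_0)

lemma Phi_invertible:
  assumes "j \<le> k"
  shows "\<Phi> j \<in> carrier_mat m m" "invertible_mat (\<Phi> j)" "invertible_mat (Gam j)"
  using bcg_lanczos_rel_upto[of k] assms unfolding bcg_lanczos_rel_def by auto

lemma gram_R_Phi: "j \<le> k \<Longrightarrow> (R j)\<^sup>T * R j = (\<Phi> j)\<^sup>T * \<Phi> j"
  using bcg_lanczos_rel_upto[of j] gram_R Phi_invertible(1) unfolding bcg_lanczos_rel_def by auto

lemma Delta_regular_upto_k: "Delta_regular_upto k"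
  using bcg_lanczos_rel_upto[of k] unfolding bcg_lanczos_rel_def by auto

lemma Delta_mu_carrier:
  assumes "1 \<le> j" "j \<le> k + 1"
  shows "Delta_mu m Gam Om \<mu> j \<in> carrier_mat m m"
proof (cases "j \<le> 1")
  case False
  then have "1 \<le> j - 1" "j - 1 \<le> k" using assms by auto
  then show ?thesis
    unfolding Delta_mu_def Om_mu_def blk_def using False Gam_carrier[of "j - 1"]
      Delta_regular_uptoD(4)[OF Delta_regular_upto_k] by auto
qed (simp add: Delta_mu_def)

lemma Delta_mu_last:
  assumes k: "1 \<le> k" and not_eig: "\<And>j. 1 \<le> j \<Longrightarrow> j \<le> k \<Longrightarrow> \<not> eigenvalue (T_mat m Gam Om j) \<mu>"
  shows "invertible_mat (\<Delta> k - Delta_mu m Gam Om \<mu> k)"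
    "Delta_mu m Gam Om \<mu> (k + 1) = \<mu> \<cdot>\<^sub>m 1\<^sub>m m
      + Gam k * minv (\<Delta> k - Delta_mu m Gam Om \<mu> k) * (Gam k)\<^sup>T - Gam k * minv (\<Delta> k) * (Gam k)\<^sup>T"
proof -
  have T_shift: "invertible_mat (T_mat m Gam Om j - \<mu> \<cdot>\<^sub>m 1\<^sub>m (j * m))" if "1 \<le> j" "j \<le> k" for j
    using invertible_shift_if_not_eigenvalue[OF T_mat_carrier] not_eig that by auto
  have "invertible_mat (\<Delta> k - Delta_mu m Gam Om \<mu> k) \<and>
      minv (\<Delta> k - Delta_mu m Gam Om \<mu> k) = blk m (minv (T_mat m Gam Om k - \<mu> \<cdot>\<^sub>m 1\<^sub>m (k * m))) k k"
    using Delta_minus_Delta_mu_inverse[OF k T_shift[OF k order.refl]] T_shift[of "k - 1"] k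
      Om_carrier[OF k order.refl] Gam_carrier[of "k - 1"] Delta_regular_uptoD(4)[OF Delta_regular_upto_k]
    by auto
  then show "invertible_mat (\<Delta> k - Delta_mu m Gam Om \<mu> k)"
    "Delta_mu m Gam Om \<mu> (k + 1) = \<mu> \<cdot>\<^sub>m 1\<^sub>m m
      + Gam k * minv (\<Delta> k - Delta_mu m Gam Om \<mu> k) * (Gam k)\<^sup>T - Gam k * minv (\<Delta> k) * (Gam k)\<^sup>T"
    unfolding Delta_mu_def[of m Gam Om \<mu> "k + 1"] Om_mu_def using k by simp_all
qed

lemma bcg_Ups_Phi: "i < k \<Longrightarrow> Ups i = minv (\<Phi> i) * minv (\<Delta> (i + 1)) * \<Phi> i"
  using bcg_lanczos_rel_upto[of k] unfolding bcg_lanczos_rel_def by auto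

end

theorem theorem5:
  fixes n m k :: nat and A B X0 :: "real mat" and \<mu> :: real
    and V Gam Om :: "nat \<Rightarrow> real mat"
  defines "R \<equiv> bcg_R A B X0"
  defines "Ups \<equiv> bcg_Ups A B X0"
  defines "Xi \<equiv> bcg_Xi A B X0"
  defines "Theta \<equiv> bcg_Theta A B X0"
  defines "Ups\<^sub>\<mu> \<equiv> Ups_mu m Gam Om \<mu>"
  defines "Theta\<^sub>\<mu> \<equiv> (\<lambda>j. ((R j)\<^sup>T * R j) * Ups\<^sub>\<mu> j)"
  assumes k: "k \<ge> 1"
    and A: "sym_pos_def n A"
    and B: "B \<in> carrier_mat n m" and X0: "X0 \<in> carrier_mat n m"
    and lanczos: "is_block_lanczos n m A (R 0) V Gam Om k"
    and krylov: "\<forall>j. 1 \<le> j \<and> j \<le> k + 1 \<longrightarrow> full_col_rank (krylov_mat A (R 0) j)"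
    and R_rank: "\<forall>j \<le> k. full_col_rank (R j)"
    and not_eig: "\<forall>j. 1 \<le> j \<and> j \<le> k \<longrightarrow> \<not> eigenvalue (T_mat m Gam Om j) \<mu>"
    and Dmu_inv: "\<forall>j. 1 \<le> j \<and> j \<le> k + 1 \<longrightarrow> invertible_mat (Delta_mu m Gam Om \<mu> j)"
  shows "Ups\<^sub>\<mu> 0 = (1 / \<mu>) \<cdot>\<^sub>m 1\<^sub>m m
    \<and> invertible_mat (\<mu> \<cdot>\<^sub>m (Ups\<^sub>\<mu> (k - 1) - Ups (k - 1)) + Xi k)
    \<and> Ups\<^sub>\<mu> k = minv (\<mu> \<cdot>\<^sub>m (Ups\<^sub>\<mu> (k - 1) - Ups (k - 1)) + Xi k) * (Ups\<^sub>\<mu> (k - 1) - Ups (k - 1))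
    \<and> invertible_mat (\<mu> \<cdot>\<^sub>m (Theta\<^sub>\<mu> (k - 1) - Theta (k - 1)) + (R k)\<^sup>T * R k)
    \<and> Ups\<^sub>\<mu> k = minv (\<mu> \<cdot>\<^sub>m (Theta\<^sub>\<mu> (k - 1) - Theta (k - 1)) + (R k)\<^sup>T * R k)
                   * (Theta\<^sub>\<mu> (k - 1) - Theta (k - 1))"
proof -
  interpret bcg_lanczos n m k A B X0 V Gam Om
    using A lanczos R_rank unfolding R_def by unfold_locales auto
  have k': "k - 1 < k" "k - 1 + 1 = k" "k - 1 \<le> k" using k by auto
  note Delta_k = Delta_regular_uptoD[OF Delta_regular_upto_k k order.refl]
  have "\<And>j. 1 \<le> j \<Longrightarrow> j \<le> k \<Longrightarrow> \<not> eigenvalue (T_mat m Gam Om j) \<mu>" using not_eig by auto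
  note shift = Delta_mu_last[OF k this]
  have Dmu: "invertible_mat (Delta_mu m Gam Om \<mu> k)" "invertible_mat (Delta_mu m Gam Om \<mu> (k + 1))"
    "invertible_mat (\<mu> \<cdot>\<^sub>m 1\<^sub>m m)"
    using Dmu_inv k by (auto simp: Delta_mu_def)
  have Ups_mu_initial: "Ups\<^sub>\<mu> 0 = (1 / \<mu>) \<cdot>\<^sub>m 1\<^sub>m m"
    unfolding Ups\<^sub>\<mu>_def by (rule Ups_mu_0[where Gam = Gam, OF Gam_0_carrier Phi_invertible(3)[OF le0] Dmu(3)])
  have Phi_k: "\<Phi> k = Gam k * minv (\<Delta> k) * \<Phi> (k - 1)" using Phi_Suc[of "k - 1"] k'(2) by simp
  have Ups_mu_pred: "Ups_mu m Gam Om \<mu> (k - 1) = minv (\<Phi> (k - 1)) * minv (Delta_mu m Gam Om \<mu> k) * \<Phi> (k - 1)"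
    unfolding Ups_mu_def k'(2) ..
  show ?thesis
    using Ups_mu_initial shifted_Ups_recurrence[OF Delta_k(1,2,3) Delta_mu_carrier[OF k le_add1] Dmu(1) shift(1)
      Gam_carrier[OF order.refl] Phi_invertible(3)[OF order.refl] Phi_invertible(1,2)[OF k'(3)] shift(2) Dmu(2)]
    unfolding Ups\<^sub>\<mu>_def Ups_def Xi_def Theta_def Theta\<^sub>\<mu>_def R_def bcg_Xi_def bcg_Theta_def Ups_mu_pred
      bcg_Ups_Phi[OF k'(1)] gram_R_Phi[OF k'(3)] gram_R_Phi[OF order.refl] Ups_mu_def[of _ _ _ _ k] Phi_k k'(2)
    by blast
qed

end
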